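(* Let $\mu\in\mathcal P_2(\mathbb R^d)$ and $N\ge1$. A subset $\Gamma\subset\mathbb R^d$ with cardinality at most $N$ is a quadratic optimal $N$-quantizer of $\mu$ if and only if there exists $\nu\in\mathcal P_{\le\mu}(\mathbb R^d,N)$ with $\nu(\Gamma)=1$ satisfying one of the following two equivalent conditions: (i) $W_2(\mu,\nu)=\inf_{\eta\in\mathcal P_{\le\mu}(\mathbb R^d,N)}W_2(\mu,\eta)$; (ii) $\int|x|^2\nu(dx)=\sup_{\eta\in\mathcal P_{\le\mu}(\mathbb R^d,N)}\int|x|^2\eta(dx)$. Moreover, in that case $W_2(\nu,\mu)=M_2(\nu,\mu)$ and $\nu=\hat\mu^\Gamma$.
   Context: $\mu\le_{cvx}\nu$ (convex order) means $\int\varphi\,d\mu\le\int\varphi\,d\nu$ for all convex $\varphi:\mathbb R^d\to\mathbb R$. $\mathcal P(\mathbb R^d,N)$ is the set of probability measures whose support has at most $N$ points and $\mathcal P_{\le\mu}(\mathbb R^d,N)=\{\eta\in\mathcal P(\mathbb R^d,N):\eta\le_{cvx}\mu\}$. $W_2$ is the quadratic Wasserstein distance. For $\eta\le_{cvx}\nu$ with finite first moments, a martingale coupling is a coupling $\pi(dx,dy)=\eta(dx)\pi_x(dy)$ with $\int y\,\pi_x(dy)=x$ for $\eta$-a.e. $x$, and $M_p(\eta,\nu)=\inf\left(\int|x-y|^p\pi(dx,dy)\right)^{1/p}$ over martingale couplings $\pi$ of $\eta,\nu$. A quadratic optimal $N$-quantizer of $\mu$ is a set $\Gamma$ with $|\Gamma|\le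 N$ minimizing $\int\mathrm{dist}(x,\Gamma)^2\mu(dx)$; $\hat\mu^\Gamma=\mu\circ\mathrm{Proj}_\Gamma^{-1}$ for a Borel nearest neighbour projection $\mathrm{Proj}_\Gamma$ (well defined independently of the choice for optimal $\Gamma$). *)

theory Defs
  imports "HOL-Probability.Probability"
begin

definition P2 :: "'a::euclidean_space measure \<Rightarrow> bool" where
  "P2 \<mu> \<longleftrightarrow> prob_space \<mu> \<and> sets \<mu> = sets borel \<and> integrable \<mu> (\<lambda>x. norm x ^ 2)"

definition P1 :: "'a::euclidean_space measure \<Rightarrow> bool" where
  "P1 \<mu> \<longleftrightarrow> prob_space \<mu> \<and> sets \<mu> = sets borel \<and> integrable \<mu> norm"

text \<open>Integrals of convex functions are taken in (-inf, +inf]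
  (convex functions are bounded below by affine ones, which are integrable under
  finite first moments); hence the inequality is trivial if the right-hand integral
  is +inf, and otherwise both sides are finite.\<close>
definition cvx_le :: "'a::euclidean_space measure \<Rightarrow> 'a measure \<Rightarrow> bool" where
  "cvx_le \<mu> \<nu> \<longleftrightarrow> P1 \<mu> \<and> P1 \<nu> \<and>
     (\<forall>\<phi>::'a \<Rightarrow> real. convex_on UNIV \<phi> \<longrightarrow> integrable \<nu> \<phi> \<longrightarrow>
        integrable \<mu> \<phi> \<and> (\<integral>x. \<phi> x \<partial>\<mu>) \<le> (\<integral>x. \<phi> x \<partial>\<nu>))"

definition PN :: "nat \<Rightarrow> 'a::euclidean_space measure set" where
  "PN N = {\<eta>. prob_space \<eta> \<and> sets \<eta> = sets borel \<and>
              (\<exists>S. finite S \<and> card S \<le> N \<and> emeasure \<eta> S = 1)}"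

definition Pcvx :: "'a::euclidean_space measure \<Rightarrow> nat \<Rightarrow> 'a measure set" where
  "Pcvx \<mu> N = {\<eta>. \<eta> \<in> PN N \<and> cvx_le \<eta> \<mu>}"

definition couplings :: "'a::euclidean_space measure \<Rightarrow> 'a measure \<Rightarrow> ('a \<times> 'a) measure set" where
  "couplings \<mu> \<nu> = {\<pi>. sets \<pi> = sets borel \<and> distr \<pi> borel fst = \<mu> \<and> distr \<pi> borel snd = \<nu>}"

definition W2 :: "'a::euclidean_space measure \<Rightarrow> 'a measure \<Rightarrow> real" where
  "W2 \<mu> \<nu> = sqrt (enn2real (INF \<pi>\<in>couplings \<mu> \<nu>.
       \<integral>\<^sup>+ z. ennreal ((dist (fst z) (snd z))^2) \<partial>\<pi>))"

definition mart_couplings :: "'a::euclidean_space measure \<Rightarrow> 'a measure \<Rightarrow> ('a \<times> 'a) measure set" where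
  "mart_couplings \<eta> \<nu> = {\<pi>. \<pi> \<in> couplings \<eta> \<nu> \<and>
     (\<exists>K. K \<in> measurable \<eta> (prob_algebra borel) \<and>
          \<pi> = \<eta> \<bind> (\<lambda>x. distr (K x) borel (\<lambda>y. (x, y))) \<and>
          (AE x in \<eta>. integrable (K x) (\<lambda>y. y) \<and> (\<integral>y. y \<partial>(K x)) = x))}"

definition M2 :: "'a::euclidean_space measure \<Rightarrow> 'a measure \<Rightarrow> real" where
  "M2 \<eta> \<nu> = sqrt (enn2real (INF \<pi>\<in>mart_couplings \<eta> \<nu>.
       \<integral>\<^sup>+ z. ennreal ((dist (fst z) (snd z))^2) \<partial>\<pi>))"

definition distortion :: "'a::euclidean_space measure \<Rightarrow> 'a set \<Rightarrow> ennreal" where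
  "distortion \<mu> \<Gamma> = (\<integral>\<^sup>+ x. ennreal ((infdist x \<Gamma>)^2) \<partial>\<mu>)"

text \<open>Quadratic optimal N-quantizer (grids are nonempty: dist(x, {}) = +inf).\<close>
definition opt_quantizer :: "'a::euclidean_space measure \<Rightarrow> nat \<Rightarrow> 'a set \<Rightarrow> bool" where
  "opt_quantizer \<mu> N \<Gamma> \<longleftrightarrow> finite \<Gamma> \<and> \<Gamma> \<noteq> {} \<and> card \<Gamma> \<le> N \<and>
     (\<forall>\<Gamma>'. finite \<Gamma>' \<and> \<Gamma>' \<noteq> {} \<and> card \<Gamma>' \<le> N \<longrightarrow> distortion \<mu> \<Gamma> \<le> distortion \<mu> \<Gamma>')"

definition nn_proj :: "'a::euclidean_space set \<Rightarrow> ('a \<Rightarrow> 'a) \<Rightarrow> bool" where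
  "nn_proj \<Gamma> p \<longleftrightarrow> p \<in> borel_measurable borel \<and> (\<forall>x. p x \<in> \<Gamma> \<and> dist x (p x) = infdist x \<Gamma>)"

end

theory Submission
  imports Defs
begin

(* Let D(S) be the distortion of a grid S. If \<eta> is supported by S, every coupling of \<mu> and \<eta>
   costs at least D(S); if moreover \<eta> <=_cvx \<mu>, the convex test function max_(s \<in> S) (2 <s, x> - |s|^2)
   shows that the second moment of \<eta> is at most that of \<mu> minus D(S). Conversely the Lloyd step
   of any grid \<Gamma>' yields a self-consistent quantizer q with cost at most D(\<Gamma>'); the image of \<mu>
   under q is dominated by \<mu> (Jensen on each cell), lies within W2-distance D(\<Gamma>')^(1/2) of \<mu>
   and has second moment at least m2(\<mu>) - D(\<Gamma>'). So both extremal problems are solved exactly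
   by the images of \<mu> under nearest-neighbour projections onto optimal grids.
   For uniqueness, perturbing both lower bounds by \<epsilon> at a point \<gamma> of the grid shows that an
   extremal \<nu> gives \<gamma> at most the \<mu>-mass of the closed Voronoi cell of \<gamma>. Optimality makes the
   cell boundaries \<mu>-null, so these masses add up to one and \<nu> is the projected measure.
   Conditioning \<mu> on the cells gives a martingale coupling of cost D, whence W2 = M2. *)

section \<open>Finitely supported measures\<close>

lemma sum_indicator_singleton:
  assumes "finite S" "x \<in> S"
  shows "(\<Sum>s\<in>S. indicator {s} x * g s) = (g x :: 'b::semiring_1)"
proof -
  have "(\<Sum>s\<in>S. indicator {s} x * g s) = (\<Sum>s\<in>S. if x = s then g x else 0)"
    by (intro sum.cong) (auto simp: indicator_def)
  also have "\<dots> = g x" using assms by simp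
  finally show ?thesis .
qed

lemma sum_indicator_level_set:
  assumes "finite R" "\<forall>x. q x \<in> R"
  shows "h (q x) x = (\<Sum>s\<in>R. indicator (q -` {s}) x * (h s x :: 'b::semiring_1))"
  using sum_indicator_singleton[OF assms(1), of "q x" "\<lambda>s. h s x"] assms(2)
  by (simp add: indicator_def)

lemma (in finite_measure) integrable_indicator_mult_const:
  "A \<in> sets M \<Longrightarrow> integrable M (\<lambda>x. indicator A x * (c::real))"
  using integrable_mult_indicator[of A M "\<lambda>_. c"] by simp

lemma finite_in_sets_borel: "finite (S::'a::t1_space set) \<Longrightarrow> S \<in> sets borel"
  by (intro borel_closed finite_imp_closed)

lemma AE_in_finite_support:
  fixes \<eta> :: "'a::euclidean_space measure"
  assumes "prob_space \<eta>" "sets \<eta> = sets borel" "finite S" "emeasure \<eta> S = 1"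
  shows "AE x in \<eta>. x \<in> S"
proof -
  interpret prob_space \<eta> by fact
  have "S \<in> sets \<eta>" using assms(2,3) finite_in_sets_borel by auto
  then show ?thesis using AE_in_set_eq_1 assms(4) by (simp add: emeasure_eq_measure)
qed

lemma nn_integral_finite_support:
  fixes \<eta> :: "'a::euclidean_space measure"
  assumes "prob_space \<eta>" "sets \<eta> = sets borel" "finite S" "emeasure \<eta> S = 1"
  shows "(\<integral>\<^sup>+x. f x \<partial>\<eta>) = (\<Sum>s\<in>S. f s * emeasure \<eta> {s})"
proof -
  have sing: "\<And>s. {s} \<in> sets \<eta>" using assms(2) by auto
  have "(\<integral>\<^sup>+x. f x \<partial>\<eta>) = (\<integral>\<^sup>+x. (\<Sum>s\<in>S. f s * indicator {s} x) \<partial>\<eta>)"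
    using AE_in_finite_support[OF assms]
    by (intro nn_integral_cong_AE, eventually_elim)
      (simp add: sum_indicator_singleton[OF assms(3)] mult.commute[of "f _"])
  also have "\<dots> = (\<Sum>s\<in>S. \<integral>\<^sup>+x. f s * indicator {s} x \<partial>\<eta>)"
    by (rule nn_integral_sum) (use sing in auto)
  also have "\<dots> = (\<Sum>s\<in>S. f s * emeasure \<eta> {s})"
    using sing by (intro sum.cong refl nn_integral_cmult_indicator)
  finally show ?thesis .
qed

lemma finite_support_integral:
  fixes f :: "'a::euclidean_space \<Rightarrow> real"
  assumes "prob_space \<eta>" "sets \<eta> = sets borel" "finite S" "emeasure \<eta> S = 1"
    and f: "f \<in> borel_measurable borel"
  shows "integrable \<eta> f" "(\<integral>x. f x \<partial>\<eta>) = (\<Sum>s\<in>S. f s * measure \<eta> {s})"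
proof -
  interpret prob_space \<eta> by fact
  let ?g = "\<lambda>x. \<Sum>s\<in>S. indicator {s} x * f s"
  have sing: "\<And>s. {s} \<in> sets \<eta>" using assms(2) by auto
  have ae: "AE x in \<eta>. f x = ?g x"
    using AE_in_finite_support[OF assms(1-4)]
    by eventually_elim (simp add: sum_indicator_singleton[OF assms(3)])
  have fm: "f \<in> borel_measurable \<eta>" using f assms(2) by (simp cong: measurable_cong_sets)
  have ig: "integrable \<eta> ?g"
    by (intro Bochner_Integration.integrable_sum integrable_indicator_mult_const sing)
  then show "integrable \<eta> f"
    using integrable_cong_AE[OF fm _ ae] by auto
  have "(\<integral>x. f x \<partial>\<eta>) = (\<integral>x. ?g x \<partial>\<eta>)"
    using ig by (intro integral_cong_AE[OF fm _ ae]) auto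
  also have "\<dots> = (\<Sum>s\<in>S. \<integral>x. indicator {s} x * f s \<partial>\<eta>)"
    by (intro Bochner_Integration.integral_sum integrable_indicator_mult_const sing)
  also have "\<dots> = (\<Sum>s\<in>S. f s * measure \<eta> {s})"
    using sing by (intro sum.cong refl) auto
  finally show "(\<integral>x. f x \<partial>\<eta>) = (\<Sum>s\<in>S. f s * measure \<eta> {s})" .
qed

lemma nn_integral_power2_norm_finite_support:
  fixes \<eta> :: "'a::euclidean_space measure"
  assumes "prob_space \<eta>" "sets \<eta> = sets borel" "finite S" "emeasure \<eta> S = 1"
  shows "(\<integral>\<^sup>+x. ennreal (norm x ^ 2) \<partial>\<eta>) < \<infinity>"
proof -
  interpret prob_space \<eta> by fact
  show ?thesis
    using nn_integral_finite_support[OF assms] assms(3)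
    by (simp add: ennreal_mult_less_top emeasure_eq_measure flip: ennreal_mult)
qed

lemma finite_support_measure_eqI:
  fixes \<nu> \<eta> :: "'a::euclidean_space measure"
  assumes \<nu>: "prob_space \<nu>" "sets \<nu> = sets borel" "emeasure \<nu> \<Gamma> = 1"
    and \<eta>: "prob_space \<eta>" "sets \<eta> = sets borel" "emeasure \<eta> \<Gamma> = 1"
    and \<Gamma>: "finite \<Gamma>" and le: "\<And>\<gamma>. \<gamma> \<in> \<Gamma> \<Longrightarrow> measure \<nu> {\<gamma>} \<le> measure \<eta> {\<gamma>}"
  shows "\<nu> = \<eta>"
proof -
  interpret V: prob_space \<nu> by fact
  interpret E: prob_space \<eta> by fact
  have s1: "(\<Sum>\<gamma>\<in>\<Gamma>. measure \<nu> {\<gamma>}) = 1"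
    using measure_eq_sum_singleton[OF \<Gamma>, of \<nu>] \<nu>(2,3) by (simp add: V.emeasure_eq_measure)
  have s2: "(\<Sum>\<gamma>\<in>\<Gamma>. measure \<eta> {\<gamma>}) = 1"
    using measure_eq_sum_singleton[OF \<Gamma>, of \<eta>] \<eta>(2,3) by (simp add: E.emeasure_eq_measure)
  have eqs: "measure \<nu> {\<gamma>} = measure \<eta> {\<gamma>}" if "\<gamma> \<in> \<Gamma>" for \<gamma>
  proof (rule ccontr)
    assume "measure \<nu> {\<gamma>} \<noteq> measure \<eta> {\<gamma>}"
    then have "(\<Sum>\<gamma>\<in>\<Gamma>. measure \<nu> {\<gamma>}) < (\<Sum>\<gamma>\<in>\<Gamma>. measure \<eta> {\<gamma>})"
      using le that by (intro sum_strict_mono_ex1[OF \<Gamma>]) (auto intro: bexI[of _ \<gamma>] order.not_eq_order_implies_strict)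
    then show False using s1 s2 by simp
  qed
  show ?thesis
  proof (rule measure_eqI)
    show "sets \<nu> = sets \<eta>" using \<nu>(2) \<eta>(2) by simp
    fix A assume A: "A \<in> sets \<nu>"
    have "emeasure \<nu> A = (\<Sum>s\<in>\<Gamma>. indicator A s * emeasure \<nu> {s})"
      using A nn_integral_finite_support[OF \<nu>(1,2) \<Gamma> \<nu>(3), of "indicator A"] by simp
    also have "\<dots> = (\<Sum>s\<in>\<Gamma>. indicator A s * emeasure \<eta> {s})"
      using eqs by (intro sum.cong refl) (simp add: V.emeasure_eq_measure E.emeasure_eq_measure)
    also have "\<dots> = emeasure \<eta> A"
      using A \<nu>(2) \<eta>(2) nn_integral_finite_support[OF \<eta>(1,2) \<Gamma> \<eta>(3), of "indicator A"] by simp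
    finally show "emeasure \<nu> A = emeasure \<eta> A" .
  qed
qed

lemma integrable_finite_range:
  fixes h :: "'b \<Rightarrow> 'a \<Rightarrow> real"
  assumes "finite R" "\<forall>x. q x \<in> R"
    and "\<And>s. s \<in> R \<Longrightarrow> integrable M (\<lambda>x. indicator (q -` {s}) x * h s x)"
  shows "integrable M (\<lambda>x. h (q x) x)"
  using sum_indicator_level_set[OF assms(1,2), of h]
  by (simp only: Bochner_Integration.integrable_sum assms(3))

lemma integral_finite_range:
  fixes h :: "'b \<Rightarrow> 'a \<Rightarrow> real"
  assumes "finite R" "\<forall>x. q x \<in> R"
    and "\<And>s. s \<in> R \<Longrightarrow> integrable M (\<lambda>x. indicator (q -` {s}) x * h s x)"
  shows "(\<integral>x. h (q x) x \<partial>M) = (\<Sum>s\<in>R. \<integral>x. indicator (q -` {s}) x * h s x \<partial>M)"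
  using sum_indicator_level_set[OF assms(1,2), of h]
  by (simp only: Bochner_Integration.integral_sum assms(3))

section \<open>Elementary inequalities and convex functions\<close>

lemma power2_dist_le: "dist (x::'a::real_normed_vector) y ^ 2 \<le> 2 * norm x ^ 2 + 2 * norm y ^ 2"
proof -
  have "dist x y \<le> norm x + norm y" by (simp add: dist_norm norm_triangle_ineq4)
  then have "dist x y ^ 2 \<le> (norm x + norm y) ^ 2" by (simp add: power_mono)
  also have "\<dots> \<le> 2 * norm x ^ 2 + 2 * norm y ^ 2"
    using zero_le_power2[of "norm x - norm y"] unfolding power2_sum power2_diff by linarith
  finally show ?thesis .
qed

lemma norm_le_1_plus_power2: "norm (x::'a::real_normed_vector) \<le> 1 + norm x ^ 2"
proof (cases "norm x \<le> 1")
  case True then show ?thesis using zero_le_power2[of "norm x"] by linarith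
next
  case False then have "norm x * 1 \<le> norm x * norm x" by (intro mult_left_mono) auto
  then show ?thesis by (simp add: power2_eq_square)
qed

lemma power2_norm_tangent:
  "inner (2 *\<^sub>R s) x - norm s ^ 2 = norm x ^ 2 - dist x (s::'a::real_inner) ^ 2"
  by (simp add: dist_norm power2_norm_eq_inner inner_diff_left inner_diff_right
      inner_commute[of s x] algebra_simps)

lemma power2_dist_via_point:
  "dist x p ^ 2 = dist x c ^ 2 + inner (2 *\<^sub>R (c - p)) (x - c) + dist c (p::'a::real_inner) ^ 2"
proof -
  define a b where "a = x - c" and "b = c - p"
  have "dist x p ^ 2 = inner (a + b) (a + b)" by (simp add: a_def b_def dist_norm power2_norm_eq_inner)
  also have "\<dots> = inner a a + 2 * inner b a + inner b b"
    by (simp add: inner_add_left inner_add_right inner_commute[of a b])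
  finally show ?thesis by (simp add: a_def b_def dist_norm power2_norm_eq_inner)
qed

lemma power2_infdist_le: "s \<in> S \<Longrightarrow> infdist x S ^ 2 \<le> dist x s ^ 2"
  by (intro power_mono infdist_le infdist_nonneg)

lemma convex_strict_epigraph:
  fixes \<phi> :: "'a::real_vector \<Rightarrow> real"
  assumes cvx: "convex_on UNIV \<phi>"
  shows "convex {z. \<phi> (fst z) < snd z}"
  unfolding convex_def
proof (clarsimp)
  fix a :: 'a and b :: real and a' :: 'a and b' :: real and u v :: real
  assume h: "\<phi> a < b" "\<phi> a' < b'" "0 \<le> u" "0 \<le> v" "u + v = 1"
  have uv: "u = 1 - v" using h by simp
  have "\<phi> (u *\<^sub>R a + v *\<^sub>R a') \<le> u * \<phi> a + v * \<phi> a'"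
    using convex_onD[OF cvx, of v a a'] h unfolding uv by simp
  also have "\<dots> < u * b + v * b'"
  proof (cases "u = 0")
    case True then show ?thesis using h by simp
  next
    case False then have "u * \<phi> a < u * b" using h by simp
    moreover have "v * \<phi> a' \<le> v * b'" using h by (simp add: mult_left_mono)
    ultimately show ?thesis by simp
  qed
  finally show "\<phi> (u *\<^sub>R a + v *\<^sub>R a') < u * b + v * b'" .
qed

text \<open>The supporting hyperplane of the strict epigraph at \<open>(c, \<phi> c)\<close> is not vertical,
  so its slope yields a subgradient.\<close>
lemma convex_on_UNIV_subgradient:
  fixes \<phi> :: "'a::euclidean_space \<Rightarrow> real"
  assumes cvx: "convex_on UNIV \<phi>"
  shows "\<exists>g. \<forall>x. \<phi> c + inner g (x - c) \<le> \<phi> x"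
proof -
  define T where "T = {z::'a\<times>real. \<phi> (fst z) < snd z}"
  have cT: "convex T" unfolding T_def by (rule convex_strict_epigraph[OF cvx])
  have "{(c, \<phi> c)} \<inter> T = {}" by (simp add: T_def)
  moreover have "(c, \<phi> c + 1) \<in> T" by (simp add: T_def)
  then have "T \<noteq> {}" by blast
  ultimately obtain a b where ab: "a \<noteq> 0" "\<forall>z\<in>{(c, \<phi> c)}. inner a z \<le> b" "\<forall>z\<in>T. inner a z \<ge> b"
    using separating_hyperplane_sets[of "{(c, \<phi> c)}" T] cT by auto
  obtain g \<alpha> where a: "a = (g, \<alpha>)" by (cases a)
  have below: "inner g c + \<alpha> * \<phi> c \<le> b" using ab(2) a by simp
  have above: "\<And>x t. \<phi> x < t \<Longrightarrow> b \<le> inner g x + \<alpha> * t" using ab(3) a by (auto simp: T_def)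
  have "\<alpha> \<ge> 0"
  proof (rule ccontr)
    assume "\<not> \<alpha> \<ge> 0"
    moreover have "b \<le> inner g c + \<alpha> * (\<phi> c + 1)" using above[of c "\<phi> c + 1"] by simp
    ultimately show False using below by (simp add: algebra_simps)
  qed
  moreover have "\<alpha> \<noteq> 0"
  proof
    assume "\<alpha> = 0"
    then have "b \<le> inner g (c - g)" using above[of "c - g" "\<phi> (c - g) + 1"] by simp
    then have "inner g g \<le> 0" using below \<open>\<alpha> = 0\<close> by (simp add: inner_diff_right)
    then have "g = 0" using inner_ge_zero[of g] inner_eq_zero_iff[of g] by linarith
    then show False using ab(1) a \<open>\<alpha> = 0\<close> by (simp add: zero_prod_def)
  qed
  ultimately have "\<alpha> > 0" by simp
  show ?thesis
  proof (intro exI allI)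
    fix x
    show "\<phi> c + inner (- (1/\<alpha>) *\<^sub>R g) (x - c) \<le> \<phi> x"
    proof (rule ccontr)
      define K where "K = \<phi> c + inner (- (1/\<alpha>) *\<^sub>R g) (x - c)"
      assume "\<not> ?thesis"
      then have lt: "\<phi> x < K" by (simp add: K_def)
      define t where "t = (\<phi> x + K) / 2"
      have "\<phi> x < t" using lt by (simp add: t_def)
      from above[OF this] below have "inner g c + \<alpha> * \<phi> c \<le> inner g x + \<alpha> * t" by simp
      then have "K \<le> t"
        using \<open>\<alpha> > 0\<close> unfolding K_def by (simp add: inner_diff_right field_simps)
      then show False using lt unfolding t_def by simp
    qed
  qed
qed

lemma convex_on_UNIV_borel_measurable:
  fixes \<phi> :: "'a::euclidean_space \<Rightarrow> real"
  shows "convex_on UNIV \<phi> \<Longrightarrow> \<phi> \<in> borel_measurable borel"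
  using convex_measurable[of "\<lambda>x. x" borel UNIV \<phi>] by simp

lemma convex_on_Max_affine:
  fixes a :: "'i \<Rightarrow> 'a::euclidean_space" and b :: "'i \<Rightarrow> real"
  assumes "finite S" "S \<noteq> {}"
  shows "convex_on UNIV (\<lambda>x. Max ((\<lambda>s. inner (a s) x + b s) ` S))"
proof (rule convex_onI)
  show "convex (UNIV :: 'a set)" by simp
  fix t :: real and x y :: 'a assume t: "0 < t" "t < 1"
  define z where "z = (1 - t) *\<^sub>R x + t *\<^sub>R y"
  have "Max ((\<lambda>s. inner (a s) z + b s) ` S) \<in> (\<lambda>s. inner (a s) z + b s) ` S"
    using assms by (intro Max_in) auto
  then obtain s where s: "s \<in> S" "Max ((\<lambda>s. inner (a s) z + b s) ` S) = inner (a s) z + b s" by auto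
  have "inner (a s) z + b s = (1 - t) * (inner (a s) x + b s) + t * (inner (a s) y + b s)"
    unfolding z_def by (simp add: inner_add_right algebra_simps)
  also have "\<dots> \<le> (1 - t) * Max ((\<lambda>s. inner (a s) x + b s) ` S) + t * Max ((\<lambda>s. inner (a s) y + b s) ` S)"
    using t s(1) assms(1) by (intro add_mono mult_left_mono Max_ge) auto
  finally show "Max ((\<lambda>s. inner (a s) ((1 - t) *\<^sub>R x + t *\<^sub>R y) + b s) ` S)
    \<le> (1 - t) * Max ((\<lambda>s. inner (a s) x + b s) ` S) + t * Max ((\<lambda>s. inner (a s) y + b s) ` S)"
    using s(2) unfolding z_def by simp
qed


section \<open>Voronoi cells and nearest-neighbour projections\<close>

definition voronoi_cell :: "'a::euclidean_space set \<Rightarrow> 'a \<Rightarrow> 'a set" where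
  "voronoi_cell \<Gamma> s = {x. dist x s = infdist x \<Gamma>}"

text \<open>Open neighbourhoods of the closed cell, shrinking to it as \<open>\<epsilon> \<rightarrow> 0\<close>. The \<open>\<epsilon>\<close>-perturbed
  transport inequalities bound the mass of \<open>\<gamma>\<close> by their \<open>\<mu>\<close>-measure.\<close>
definition voronoi_nbhd :: "'a::euclidean_space set \<Rightarrow> 'a \<Rightarrow> real \<Rightarrow> 'a set" where
  "voronoi_nbhd \<Gamma> \<gamma> \<epsilon> = {x. dist x \<gamma> ^ 2 - \<epsilon> < infdist x \<Gamma> ^ 2}"

lemma voronoi_cell_borel: "voronoi_cell \<Gamma> s \<in> sets borel"
proof -
  have "voronoi_cell \<Gamma> s = (\<lambda>x. dist x s - infdist x \<Gamma>) -` {0}" by (auto simp: voronoi_cell_def)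
  also have "\<dots> \<in> sets borel"
    by (rule measurable_sets_borel[OF borel_measurable_continuous_onI]) (auto intro!: continuous_intros)
  finally show ?thesis .
qed

lemma voronoi_nbhd_borel: "voronoi_nbhd \<Gamma> \<gamma> \<epsilon> \<in> sets borel"
proof -
  have "voronoi_nbhd \<Gamma> \<gamma> \<epsilon> = (\<lambda>x. dist x \<gamma> ^ 2 - \<epsilon> - infdist x \<Gamma> ^ 2) -` {..<0}"
    by (auto simp: voronoi_nbhd_def)
  also have "\<dots> \<in> sets borel"
    by (rule measurable_sets_borel[OF borel_measurable_continuous_onI]) (auto intro!: continuous_intros)
  finally show ?thesis .
qed

lemma voronoi_nbhd_antimono: "\<epsilon> \<le> \<epsilon>' \<Longrightarrow> voronoi_nbhd \<Gamma> \<gamma> \<epsilon> \<subseteq> voronoi_nbhd \<Gamma> \<gamma> \<epsilon>'"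
  by (auto simp: voronoi_nbhd_def)

lemma voronoi_cell_eq_INT_voronoi_nbhd:
  assumes "\<gamma> \<in> \<Gamma>"
  shows "voronoi_cell \<Gamma> \<gamma> = (\<Inter>n. voronoi_nbhd \<Gamma> \<gamma> (1 / Suc n))"
proof (intro equalityI subsetI)
  fix x assume "x \<in> voronoi_cell \<Gamma> \<gamma>"
  then show "x \<in> (\<Inter>n. voronoi_nbhd \<Gamma> \<gamma> (1 / Suc n))"
    by (simp add: voronoi_cell_def voronoi_nbhd_def)
next
  fix x assume x: "x \<in> (\<Inter>n. voronoi_nbhd \<Gamma> \<gamma> (1 / Suc n))"
  have "dist x \<gamma> ^ 2 \<le> infdist x \<Gamma> ^ 2"
  proof (rule ccontr)
    assume "\<not> ?thesis"
    then obtain n where n: "n > 0" "inverse (real n) < dist x \<gamma> ^ 2 - infdist x \<Gamma> ^ 2"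
      using ex_inverse_of_nat_less[of "dist x \<gamma> ^ 2 - infdist x \<Gamma> ^ 2"] by auto
    have "1 / real (Suc n) \<le> inverse (real n)" using n(1) by (simp add: inverse_eq_divide frac_le)
    moreover have "dist x \<gamma> ^ 2 - 1 / real (Suc n) < infdist x \<Gamma> ^ 2"
      using x by (auto simp: voronoi_nbhd_def)
    ultimately show False using n(2) by linarith
  qed
  then have "dist x \<gamma> \<le> infdist x \<Gamma>" by (rule power2_le_imp_le[OF _ infdist_nonneg])
  then show "x \<in> voronoi_cell \<Gamma> \<gamma>"
    using infdist_le[OF assms, of x] by (simp add: voronoi_cell_def)
qed

lemma power2_infdist_perturbed_le:
  assumes "s \<in> S" "\<epsilon> \<ge> 0"
  shows "infdist x S ^ 2 + \<epsilon> * indicator {\<gamma>} s \<le> dist x s ^ 2 + \<epsilon> * indicator (voronoi_nbhd S \<gamma> \<epsilon>) x"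
proof (cases "s = \<gamma>")
  case True
  then show ?thesis
    using power2_infdist_le[OF assms(1), of x] by (cases "x \<in> voronoi_nbhd S \<gamma> \<epsilon>") (auto simp: voronoi_nbhd_def)
next
  case False
  then show ?thesis using power2_infdist_le[OF assms(1), of x] assms(2) by (simp add: indicator_def)
qed

definition first_nearest :: "'a::euclidean_space list \<Rightarrow> 'a \<Rightarrow> 'a" where
  "first_nearest xs x = xs ! (LEAST i. i < length xs \<and> x \<in> voronoi_cell (set xs) (xs ! i))"

lemma ex_nearest_index:
  fixes xs :: "'a::euclidean_space list"
  assumes "xs \<noteq> []"
  shows "\<exists>i. i < length xs \<and> x \<in> voronoi_cell (set xs) (xs ! i)"
proof -
  have "closed (set xs)" "set xs \<noteq> {}" using assms by (auto intro: finite_imp_closed)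
  from infdist_attains_inf[OF this, of x] obtain y where "y \<in> set xs" "infdist x (set xs) = dist x y"
    by blast
  then show ?thesis by (auto simp: voronoi_cell_def in_set_conv_nth)
qed

lemma first_nearest_eq_iff:
  fixes xs :: "'a::euclidean_space list"
  assumes "xs \<noteq> []" "distinct xs" "i < length xs"
  shows "first_nearest xs x = xs ! i \<longleftrightarrow>
    x \<in> voronoi_cell (set xs) (xs ! i) \<and> (\<forall>j<i. x \<notin> voronoi_cell (set xs) (xs ! j))"
proof -
  define P where "P i = (i < length xs \<and> x \<in> voronoi_cell (set xs) (xs ! i))" for i
  obtain k where "P k" using ex_nearest_index[OF assms(1), of x] by (auto simp: P_def)
  then have L: "P (LEAST i. P i)" by (rule LeastI)
  have fn: "first_nearest xs x = xs ! (LEAST i. P i)" by (simp add: first_nearest_def P_def)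
  show ?thesis
  proof
    assume "first_nearest xs x = xs ! i"
    then have "(LEAST i. P i) = i" using L assms(2,3) fn by (simp add: P_def nth_eq_iff_index_eq)
    then show "x \<in> voronoi_cell (set xs) (xs ! i) \<and> (\<forall>j<i. x \<notin> voronoi_cell (set xs) (xs ! j))"
      using L not_less_Least[of _ P] assms(3) by (auto simp: P_def)
  next
    assume h: "x \<in> voronoi_cell (set xs) (xs ! i) \<and> (\<forall>j<i. x \<notin> voronoi_cell (set xs) (xs ! j))"
    have "(LEAST i. P i) = i"
      by (rule Least_equality) (use h assms(3) in \<open>auto simp: P_def not_less[symmetric]\<close>)
    then show "first_nearest xs x = xs ! i" using fn by simp
  qed
qed

lemma first_nearest_in_voronoi_cell:
  fixes xs :: "'a::euclidean_space list"
  assumes "xs \<noteq> []"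
  shows "first_nearest xs x \<in> set xs" "x \<in> voronoi_cell (set xs) (first_nearest xs x)"
proof -
  define P where "P i = (i < length xs \<and> x \<in> voronoi_cell (set xs) (xs ! i))" for i
  obtain k where "P k" using ex_nearest_index[OF assms(1), of x] by (auto simp: P_def)
  then have "P (LEAST i. P i)" by (rule LeastI)
  then show "first_nearest xs x \<in> set xs" "x \<in> voronoi_cell (set xs) (first_nearest xs x)"
    unfolding P_def first_nearest_def by auto
qed

lemma borel_measurable_finite_range:
  fixes f :: "'a::topological_space \<Rightarrow> 'b::topological_space"
  assumes "finite R" "\<forall>x. f x \<in> R" "\<And>r. r \<in> R \<Longrightarrow> f -` {r} \<in> sets borel"
  shows "f \<in> borel_measurable borel"
proof (rule borel_measurableI)
  fix S :: "'b set"
  have "f -` S = (\<Union>r\<in>R \<inter> S. f -` {r})" using assms(2) by auto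
  also have "\<dots> \<in> sets borel" using assms(1,3) by (intro sets.finite_UN) auto
  finally show "f -` S \<inter> space borel \<in> sets borel" by simp
qed

lemma nn_proj_first_nearest:
  fixes xs :: "'a::euclidean_space list"
  assumes "xs \<noteq> []" "distinct xs"
  shows "nn_proj (set xs) (first_nearest xs)"
proof -
  note fn = first_nearest_in_voronoi_cell[OF assms(1)]
  have "first_nearest xs \<in> borel_measurable borel"
  proof (rule borel_measurable_finite_range[of "set xs"])
    show "\<forall>x. first_nearest xs x \<in> set xs" using fn(1) by blast
    fix r assume "r \<in> set xs"
    then obtain i where i: "i < length xs" "r = xs ! i" by (auto simp: in_set_conv_nth)
    have "first_nearest xs -` {r} =
        voronoi_cell (set xs) (xs ! i) - (\<Union>j\<in>{..<i}. voronoi_cell (set xs) (xs ! j))"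
      using first_nearest_eq_iff[OF assms i(1)] i(2) by auto
    also have "\<dots> \<in> sets borel" using voronoi_cell_borel by auto
    finally show "first_nearest xs -` {r} \<in> sets borel" .
  qed simp
  then show ?thesis using fn by (simp add: nn_proj_def voronoi_cell_def)
qed

lemma ex_nn_proj:
  fixes \<Gamma> :: "'a::euclidean_space set"
  assumes "finite \<Gamma>" "\<Gamma> \<noteq> {}"
  shows "\<exists>p. nn_proj \<Gamma> p"
proof -
  obtain xs where "set xs = \<Gamma>" "distinct xs" using finite_distinct_list[OF assms(1)] by blast
  then show ?thesis using nn_proj_first_nearest[of xs] assms(2) by auto
qed

lemma nn_projD:
  assumes "nn_proj \<Gamma> p"
  shows "p \<in> borel_measurable borel" "\<And>x. p x \<in> \<Gamma>" "\<And>x. dist x (p x) = infdist x \<Gamma>"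
    "\<And>x. x \<in> voronoi_cell \<Gamma> (p x)"
  using assms by (auto simp: nn_proj_def voronoi_cell_def)

text \<open>A convex test function for the convex order: on \<open>S\<close> it dominates
  \<open>norm s ^ 2 + \<epsilon> * indicator {\<gamma>} s\<close>, while it lies below \<open>norm x ^ 2 - infdist x S ^ 2\<close>
  except for \<open>\<epsilon>\<close> on the neighbourhood of the cell of \<open>\<gamma>\<close>.\<close>
definition perturbed_tangent_max :: "'a::euclidean_space set \<Rightarrow> 'a \<Rightarrow> real \<Rightarrow> 'a \<Rightarrow> real" where
  "perturbed_tangent_max S \<gamma> \<epsilon> x =
     Max ((\<lambda>s. inner (2 *\<^sub>R s) x + (\<epsilon> * indicator {\<gamma>} s - norm s ^ 2)) ` S)"

lemma convex_on_perturbed_tangent_max: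
  "finite S \<Longrightarrow> S \<noteq> {} \<Longrightarrow> convex_on UNIV (perturbed_tangent_max S \<gamma> \<epsilon>)"
  unfolding perturbed_tangent_max_def[abs_def] by (rule convex_on_Max_affine)

lemma perturbed_tangent_max_ge:
  assumes "finite S" "s \<in> S"
  shows "norm x ^ 2 - dist x s ^ 2 + \<epsilon> * indicator {\<gamma>} s \<le> perturbed_tangent_max S \<gamma> \<epsilon> x"
  using Max_ge[OF finite_imageI[OF assms(1)] imageI[OF assms(2)],
      of "\<lambda>s. inner (2 *\<^sub>R s) x + (\<epsilon> * indicator {\<gamma>} s - norm s ^ 2)"] power2_norm_tangent[of s x]
  by (simp add: perturbed_tangent_max_def)

lemma perturbed_tangent_max_le:
  assumes "finite S" "S \<noteq> {}" "\<epsilon> \<ge> 0"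
  shows "perturbed_tangent_max S \<gamma> \<epsilon> x
    \<le> norm x ^ 2 - infdist x S ^ 2 + \<epsilon> * indicator (voronoi_nbhd S \<gamma> \<epsilon>) x"
proof -
  have "inner (2 *\<^sub>R s) x + (\<epsilon> * indicator {\<gamma>} s - norm s ^ 2)
      \<le> norm x ^ 2 - infdist x S ^ 2 + \<epsilon> * indicator (voronoi_nbhd S \<gamma> \<epsilon>) x" if "s \<in> S" for s
    using power2_infdist_perturbed_le[OF that assms(3), of x \<gamma>] power2_norm_tangent[of s x] by simp
  then show ?thesis
    unfolding perturbed_tangent_max_def using assms(1,2) by (subst Max_le_iff) auto
qed

section \<open>Couplings and the quadratic transport cost\<close>

definition quadratic_cost :: "('a::euclidean_space \<times> 'a) measure \<Rightarrow> ennreal" where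
  "quadratic_cost \<pi> = (\<integral>\<^sup>+ z. ennreal (dist (fst z) (snd z) ^ 2) \<partial>\<pi>)"

lemma W2_eq: "W2 \<mu> \<nu> = sqrt (enn2real (INF \<pi>\<in>couplings \<mu> \<nu>. quadratic_cost \<pi>))"
  by (simp add: W2_def quadratic_cost_def)

lemma M2_eq: "M2 \<mu> \<nu> = sqrt (enn2real (INF \<pi>\<in>mart_couplings \<mu> \<nu>. quadratic_cost \<pi>))"
  by (simp add: M2_def quadratic_cost_def)

lemma W2_nonneg: "W2 \<mu> \<nu> \<ge> 0"
  by (simp add: W2_def)

lemma bdd_below_W2: "bdd_below ((\<lambda>\<eta>. W2 \<mu> \<eta>) ` A)"
  by (rule bdd_belowI[of _ 0]) (auto simp: W2_nonneg)

lemma fst_borel_measurable: "(fst :: 'a::euclidean_space \<times> 'a \<Rightarrow> 'a) \<in> borel_measurable borel"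
  by (intro borel_measurable_continuous_onI continuous_intros)

lemma snd_borel_measurable: "(snd :: 'a::euclidean_space \<times> 'a \<Rightarrow> 'a) \<in> borel_measurable borel"
  by (intro borel_measurable_continuous_onI continuous_intros)

lemma borel_measurable_power2_dist:
  "(\<lambda>z::'a::euclidean_space \<times> 'a. ennreal (dist (fst z) (snd z) ^ 2)) \<in> borel_measurable borel"
proof -
  have "(\<lambda>z::'a \<times> 'a. dist (fst z) (snd z) ^ 2) \<in> borel_measurable borel"
    by (intro borel_measurable_continuous_onI continuous_intros)
  then show ?thesis by simp
qed

lemma couplingsD:
  assumes "\<pi> \<in> couplings A B"
  shows "sets \<pi> = sets borel" "distr \<pi> borel fst = A" "distr \<pi> borel snd = B"
  using assms by (auto simp: couplings_def)

lemma
  fixes \<pi> :: "('a::euclidean_space \<times> 'a) measure"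
  assumes "\<pi> \<in> couplings A B"
  shows fst_measurable_coupling: "fst \<in> \<pi> \<rightarrow>\<^sub>M borel"
    and snd_measurable_coupling: "snd \<in> \<pi> \<rightarrow>\<^sub>M borel"
  using fst_borel_measurable snd_borel_measurable couplingsD(1)[OF assms]
  by (simp_all cong: measurable_cong_sets)

lemma nn_integral_coupling_fst:
  fixes \<pi> :: "('a::euclidean_space \<times> 'a) measure"
  assumes "\<pi> \<in> couplings A B" "f \<in> borel_measurable borel"
  shows "(\<integral>\<^sup>+z. f (fst z) \<partial>\<pi>) = (\<integral>\<^sup>+x. f x \<partial>A)"
proof -
  have "(\<integral>\<^sup>+x. f x \<partial>distr \<pi> borel fst) = (\<integral>\<^sup>+z. f (fst z) \<partial>\<pi>)"
    by (rule nn_integral_distr[OF fst_measurable_coupling[OF assms(1)]]) (use assms(2) in simp)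
  then show ?thesis using couplingsD(2)[OF assms(1)] by simp
qed

lemma nn_integral_coupling_snd:
  fixes \<pi> :: "('a::euclidean_space \<times> 'a) measure"
  assumes "\<pi> \<in> couplings A B" "f \<in> borel_measurable borel"
  shows "(\<integral>\<^sup>+z. f (snd z) \<partial>\<pi>) = (\<integral>\<^sup>+x. f x \<partial>B)"
proof -
  have "(\<integral>\<^sup>+x. f x \<partial>distr \<pi> borel snd) = (\<integral>\<^sup>+z. f (snd z) \<partial>\<pi>)"
    by (rule nn_integral_distr[OF snd_measurable_coupling[OF assms(1)]]) (use assms(2) in simp)
  then show ?thesis using couplingsD(3)[OF assms(1)] by simp
qed

lemma AE_coupling_fst:
  fixes \<pi> :: "('a::euclidean_space \<times> 'a) measure"
  assumes "\<pi> \<in> couplings A B" "AE x in A. x \<in> S" "S \<in> sets borel"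
  shows "AE z in \<pi>. fst z \<in> S"
proof -
  have "AE x in distr \<pi> borel fst. x \<in> S" unfolding couplingsD(2)[OF assms(1)] by (fact assms(2))
  then show ?thesis by (subst (asm) AE_distr_iff[OF fst_measurable_coupling[OF assms(1)]]) (use assms(3) in auto)
qed

lemma AE_coupling_snd:
  fixes \<pi> :: "('a::euclidean_space \<times> 'a) measure"
  assumes "\<pi> \<in> couplings A B" "AE y in B. y \<in> S" "S \<in> sets borel"
  shows "AE z in \<pi>. snd z \<in> S"
proof -
  have "AE x in distr \<pi> borel snd. x \<in> S" unfolding couplingsD(3)[OF assms(1)] by (fact assms(2))
  then show ?thesis by (subst (asm) AE_distr_iff[OF snd_measurable_coupling[OF assms(1)]]) (use assms(3) in auto)
qed

lemma quadratic_cost_le_moments: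
  fixes \<pi> :: "('a::euclidean_space \<times> 'a) measure"
  assumes "\<pi> \<in> couplings A B"
  shows "quadratic_cost \<pi> \<le> 2 * (\<integral>\<^sup>+x. ennreal (norm x ^ 2) \<partial>A) + 2 * (\<integral>\<^sup>+x. ennreal (norm x ^ 2) \<partial>B)"
proof -
  have m: "(\<lambda>z. ennreal (norm (fst z) ^ 2)) \<in> borel_measurable \<pi>"
    "(\<lambda>z. ennreal (norm (snd z) ^ 2)) \<in> borel_measurable \<pi>"
    using fst_measurable_coupling[OF assms] snd_measurable_coupling[OF assms] by measurable
  have "quadratic_cost \<pi> \<le> (\<integral>\<^sup>+ z. 2 * ennreal (norm (fst z) ^ 2) + 2 * ennreal (norm (snd z) ^ 2) \<partial>\<pi>)"
    unfolding quadratic_cost_def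
    by (intro nn_integral_mono order_trans[OF ennreal_leI[OF power2_dist_le]])
      (simp add: ennreal_plus ennreal_mult)
  also have "\<dots> = 2 * (\<integral>\<^sup>+ z. ennreal (norm (fst z) ^ 2) \<partial>\<pi>) + 2 * (\<integral>\<^sup>+ z. ennreal (norm (snd z) ^ 2) \<partial>\<pi>)"
    using m by (subst nn_integral_add) (auto simp: nn_integral_cmult)
  also have "\<dots> = 2 * (\<integral>\<^sup>+x. ennreal (norm x ^ 2) \<partial>A) + 2 * (\<integral>\<^sup>+x. ennreal (norm x ^ 2) \<partial>B)"
    using nn_integral_coupling_fst[OF assms, of "\<lambda>x. ennreal (norm x ^ 2)"]
      nn_integral_coupling_snd[OF assms, of "\<lambda>x. ennreal (norm x ^ 2)"] by simp
  finally show ?thesis .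
qed

lemma pair_measure_in_couplings:
  fixes A B :: "'a::euclidean_space measure"
  assumes "prob_space A" "prob_space B" "sets A = sets borel" "sets B = sets borel"
  shows "A \<Otimes>\<^sub>M B \<in> couplings A B"
proof -
  interpret pair_prob_space A B using assms(1,2) by (simp add: pair_prob_space_def pair_sigma_finite_def prob_space_imp_sigma_finite)
  have sA: "space A = UNIV" using sets_eq_imp_space_eq[OF assms(3)] by simp
  have sB: "space B = UNIV" using sets_eq_imp_space_eq[OF assms(4)] by simp
  have s: "sets (A \<Otimes>\<^sub>M B) = sets borel"
    using sets_pair_measure_cong[OF assms(3,4)] borel_prod by metis
  have m1: "fst \<in> A \<Otimes>\<^sub>M B \<rightarrow>\<^sub>M borel" using fst_borel_measurable s by (simp cong: measurable_cong_sets)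
  have m2: "snd \<in> A \<Otimes>\<^sub>M B \<rightarrow>\<^sub>M borel" using snd_borel_measurable s by (simp cong: measurable_cong_sets)
  have d1: "distr (A \<Otimes>\<^sub>M B) borel fst = A"
  proof (rule measure_eqI)
    show "sets (distr (A \<Otimes>\<^sub>M B) borel fst) = sets A" using assms(3) by simp
    fix X assume "X \<in> sets (distr (A \<Otimes>\<^sub>M B) borel fst)"
    then have X: "X \<in> sets A" using assms(3) by simp
    have "emeasure (distr (A \<Otimes>\<^sub>M B) borel fst) X = emeasure (A \<Otimes>\<^sub>M B) (fst -` X \<inter> space (A \<Otimes>\<^sub>M B))"
      using X assms(3) by (intro emeasure_distr[OF m1]) auto
    also have "fst -` X \<inter> space (A \<Otimes>\<^sub>M B) = X \<times> space B" by (auto simp: space_pair_measure sA sB)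
    also have "emeasure (A \<Otimes>\<^sub>M B) (X \<times> space B) = emeasure A X * emeasure B (space B)"
      using X by (intro M2.emeasure_pair_measure_Times) auto
    finally show "emeasure (distr (A \<Otimes>\<^sub>M B) borel fst) X = emeasure A X"
      by (simp add: M2.emeasure_space_1)
  qed
  have d2: "distr (A \<Otimes>\<^sub>M B) borel snd = B"
  proof (rule measure_eqI)
    show "sets (distr (A \<Otimes>\<^sub>M B) borel snd) = sets B" using assms(4) by simp
    fix X assume "X \<in> sets (distr (A \<Otimes>\<^sub>M B) borel snd)"
    then have X: "X \<in> sets B" using assms(4) by simp
    have "emeasure (distr (A \<Otimes>\<^sub>M B) borel snd) X = emeasure (A \<Otimes>\<^sub>M B) (snd -` X \<inter> space (A \<Otimes>\<^sub>M B))"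
      using X assms(4) by (intro emeasure_distr[OF m2]) auto
    also have "snd -` X \<inter> space (A \<Otimes>\<^sub>M B) = space A \<times> X" by (auto simp: space_pair_measure sA sB)
    also have "emeasure (A \<Otimes>\<^sub>M B) (space A \<times> X) = emeasure A (space A) * emeasure B X"
      using X by (intro M2.emeasure_pair_measure_Times) auto
    finally show "emeasure (distr (A \<Otimes>\<^sub>M B) borel snd) X = emeasure B X"
      by (simp add: M1.emeasure_space_1)
  qed
  show ?thesis using s d1 d2 by (simp add: couplings_def)
qed

lemma INF_quadratic_cost_finite:
  fixes A B :: "'a::euclidean_space measure"
  assumes "prob_space A" "prob_space B" "sets A = sets borel" "sets B = sets borel"
    and "(\<integral>\<^sup>+x. ennreal (norm x ^ 2) \<partial>A) < \<infinity>" "(\<integral>\<^sup>+x. ennreal (norm x ^ 2) \<partial>B) < \<infinity>"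
  shows "(INF \<pi>\<in>couplings A B. quadratic_cost \<pi>) < \<infinity>"
proof -
  note AB = pair_measure_in_couplings[OF assms(1-4)]
  have "(INF \<pi>\<in>couplings A B. quadratic_cost \<pi>)
     \<le> 2 * (\<integral>\<^sup>+x. ennreal (norm x ^ 2) \<partial>A) + 2 * (\<integral>\<^sup>+x. ennreal (norm x ^ 2) \<partial>B)"
    by (rule INF_lower2[OF AB]) (rule quadratic_cost_le_moments[OF AB])
  also have "\<dots> < \<infinity>" using assms(5,6) by (simp add: ennreal_mult_less_top)
  finally show ?thesis .
qed

lemma W2_le_quadratic_cost:
  assumes "\<pi> \<in> couplings \<mu> \<nu>" "quadratic_cost \<pi> = ennreal c" "c \<ge> 0"
  shows "W2 \<mu> \<nu> \<le> sqrt c"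
proof -
  have "(INF \<pi>\<in>couplings \<mu> \<nu>. quadratic_cost \<pi>) \<le> ennreal c"
    by (rule INF_lower2[OF assms(1)]) (simp add: assms(2))
  then show ?thesis
    using assms(3) by (simp add: W2_eq enn2real_leI)
qed

definition kernel_coupling :: "'a::euclidean_space measure \<Rightarrow> ('a \<Rightarrow> 'a measure) \<Rightarrow> ('a \<times> 'a) measure" where
  "kernel_coupling \<nu> K = \<nu> \<bind> (\<lambda>x. distr (K x) borel (\<lambda>y. (x, y)))"

locale prob_kernel =
  fixes \<nu> :: "'a::euclidean_space measure" and K :: "'a \<Rightarrow> 'a measure"
  assumes prob_space: "prob_space \<nu>" and sets_eq: "sets \<nu> = sets borel"
    and measurable_kernel: "K \<in> \<nu> \<rightarrow>\<^sub>M prob_algebra borel"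
begin

lemma space_eq: "space \<nu> = UNIV"
  using sets_eq_imp_space_eq[OF sets_eq] by simp

lemma kernel_prob_space: "prob_space (K x)" and sets_kernel: "sets (K x) = sets borel"
  using measurable_space[OF measurable_kernel, of x] by (auto simp: space_eq space_prob_algebra)

lemma Pair_measurable_kernel: "(\<lambda>y. (x, y)) \<in> K x \<rightarrow>\<^sub>M borel"
proof -
  have "(\<lambda>y. (x, y)) \<in> (borel :: 'a measure) \<rightarrow>\<^sub>M borel"
    by (intro borel_measurable_continuous_onI continuous_intros)
  then show ?thesis using sets_kernel by (simp cong: measurable_cong_sets)
qed

lemma measurable_pair_kernel: "(\<lambda>x. distr (K x) borel (\<lambda>y. (x, y))) \<in> \<nu> \<rightarrow>\<^sub>M prob_algebra borel"
proof (rule measurable_distr_prob_space2[OF measurable_kernel])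
  have "sets (\<nu> \<Otimes>\<^sub>M (borel :: 'a measure)) = sets (borel :: ('a \<times> 'a) measure)"
    using sets_pair_measure_cong[OF sets_eq refl, of borel] borel_prod by metis
  then show "(\<lambda>(x, y). (x, y)) \<in> \<nu> \<Otimes>\<^sub>M borel \<rightarrow>\<^sub>M (borel :: ('a \<times> 'a) measure)"
    using measurable_ident_sets by (simp add: case_prod_beta')
qed

lemma sets_kernel_coupling: "sets (kernel_coupling \<nu> K) = sets borel"
  unfolding kernel_coupling_def by (subst sets_bind) (auto simp: space_eq)

lemma emeasure_kernel_coupling:
  assumes "X \<in> sets borel"
  shows "emeasure (kernel_coupling \<nu> K) X = (\<integral>\<^sup>+x. emeasure (K x) ((\<lambda>y. (x, y)) -` X) \<partial>\<nu>)"
proof -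
  have "\<nu> \<in> space (prob_algebra borel)" using prob_space sets_eq by (simp add: space_prob_algebra)
  moreover have "(\<lambda>x. distr (K x) borel (\<lambda>y. (x, y))) \<in> borel \<rightarrow>\<^sub>M prob_algebra borel"
    using measurable_pair_kernel sets_eq by (simp cong: measurable_cong_sets)
  ultimately show ?thesis
    unfolding kernel_coupling_def using assms
    by (simp add: emeasure_bind_prob_algebra emeasure_distr[OF Pair_measurable_kernel] sets_kernel
        sets_eq_imp_space_eq[OF sets_kernel])
qed

lemma distr_fst_kernel_coupling: "distr (kernel_coupling \<nu> K) borel fst = \<nu>"
proof (rule measure_eqI)
  show "sets (distr (kernel_coupling \<nu> K) borel fst) = sets \<nu>" using sets_eq by simp
  fix A assume "A \<in> sets (distr (kernel_coupling \<nu> K) borel fst)"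
  then have A: "A \<in> sets borel" by simp
  have fst: "fst \<in> kernel_coupling \<nu> K \<rightarrow>\<^sub>M borel"
    using fst_borel_measurable sets_kernel_coupling by (simp cong: measurable_cong_sets)
  have "emeasure (distr (kernel_coupling \<nu> K) borel fst) A = emeasure (kernel_coupling \<nu> K) (fst -` A)"
    using emeasure_distr[OF fst A] sets_eq_imp_space_eq[OF sets_kernel_coupling] by simp
  also have "\<dots> = (\<integral>\<^sup>+x. indicator A x \<partial>\<nu>)"
    using emeasure_kernel_coupling[OF measurable_sets_borel[OF fst_borel_measurable A]]
      prob_space.emeasure_space_1[OF kernel_prob_space] sets_eq_imp_space_eq[OF sets_kernel]
    by (auto intro!: nn_integral_cong simp: indicator_def vimage_def)
  also have "\<dots> = emeasure \<nu> A" using A sets_eq by simp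
  finally show "emeasure (distr (kernel_coupling \<nu> K) borel fst) A = emeasure \<nu> A" .
qed

lemma emeasure_distr_snd_kernel_coupling:
  assumes "B \<in> sets borel"
  shows "emeasure (distr (kernel_coupling \<nu> K) borel snd) B = (\<integral>\<^sup>+x. emeasure (K x) B \<partial>\<nu>)"
proof -
  have snd: "snd \<in> kernel_coupling \<nu> K \<rightarrow>\<^sub>M borel"
    using snd_borel_measurable sets_kernel_coupling by (simp cong: measurable_cong_sets)
  show ?thesis
    using emeasure_distr[OF snd assms] sets_eq_imp_space_eq[OF sets_kernel_coupling]
      emeasure_kernel_coupling[OF measurable_sets_borel[OF snd_borel_measurable assms]]
    by (simp add: vimage_def)
qed

lemma quadratic_cost_kernel_coupling:
  "quadratic_cost (kernel_coupling \<nu> K) = (\<integral>\<^sup>+ x. \<integral>\<^sup>+ y. ennreal (dist x y ^ 2) \<partial>K x \<partial>\<nu>)"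
proof -
  have "quadratic_cost (kernel_coupling \<nu> K) = (\<integral>\<^sup>+ x. quadratic_cost (distr (K x) borel (\<lambda>y. (x, y))) \<partial>\<nu>)"
    unfolding quadratic_cost_def kernel_coupling_def
    by (rule nn_integral_bind[OF borel_measurable_power2_dist measurable_prob_algebraD[OF measurable_pair_kernel]])
  also have "\<dots> = (\<integral>\<^sup>+ x. \<integral>\<^sup>+ y. ennreal (dist x y ^ 2) \<partial>K x \<partial>\<nu>)"
    unfolding quadratic_cost_def
    using nn_integral_distr[OF Pair_measurable_kernel, of "\<lambda>z. ennreal (dist (fst z) (snd z) ^ 2)"]
      borel_measurable_power2_dist
    by (intro nn_integral_cong) simp
  finally show ?thesis .
qed

end

lemma vimage_singleton_borel:
  "(q :: 'a::euclidean_space \<Rightarrow> 'b::t1_space) \<in> borel_measurable borel \<Longrightarrow> q -` {s} \<in> sets borel"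
  by (erule measurable_sets_borel) simp


section \<open>Measures with finite second moment\<close>

locale P2_measure =
  fixes \<mu> :: "'a::euclidean_space measure"
  assumes P2: "P2 \<mu>"
begin

sublocale prob_space \<mu> using P2 by (simp add: P2_def)

lemma sets_mu[measurable_cong]: "sets \<mu> = sets borel"
  using P2 by (simp add: P2_def)

lemma space_mu[simp]: "space \<mu> = UNIV"
  using sets_eq_imp_space_eq[OF sets_mu] by simp

lemma measurable_mu: "measurable \<mu> = measurable borel"
  by (intro ext measurable_cong_sets sets_mu refl)

lemma integrable_power2_norm: "integrable \<mu> (\<lambda>x. norm x ^ 2)"
  using P2 by (simp add: P2_def)

lemma nn_integral_power2_norm_finite: "(\<integral>\<^sup>+x. ennreal (norm x ^ 2) \<partial>\<mu>) < \<infinity>"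
  using nn_integral_eq_integral[OF integrable_power2_norm] by simp

lemma integrable_quadratic_growth:
  fixes f :: "'a \<Rightarrow> 'b::{banach, second_countable_topology}"
  assumes "f \<in> borel_measurable borel" "\<And>x. norm (f x) \<le> c + d * norm x ^ 2"
  shows "integrable \<mu> f"
proof (rule Bochner_Integration.integrable_bound[where f="\<lambda>x. c + d * norm x ^ 2"])
  show "integrable \<mu> (\<lambda>x. c + d * norm x ^ 2)" using integrable_power2_norm by simp
  show "f \<in> borel_measurable \<mu>" using assms(1) by (simp add: measurable_mu)
  show "AE x in \<mu>. norm (f x) \<le> norm (c + d * norm x ^ 2)"
    using assms(2) by (auto intro: order_trans[OF _ abs_ge_self])
qed

lemma integrable_id: "integrable \<mu> (\<lambda>x. x)"
  by (rule integrable_quadratic_growth[where c=1 and d=1]) (auto intro: norm_le_1_plus_power2)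

lemma integrable_minus_const: "integrable \<mu> (\<lambda>x. x - s)"
  using integrable_id by simp

lemma P1_mu: "P1 \<mu>"
  using integrable_norm[OF integrable_id] sets_mu by (simp add: P1_def prob_space_axioms)

lemma integrable_power2_dist: "integrable \<mu> (\<lambda>x. dist x s ^ 2)"
proof (rule integrable_quadratic_growth[where c="2 * norm s ^ 2" and d=2])
  show "(\<lambda>x. dist x s ^ 2) \<in> borel_measurable borel" by measurable
  show "norm (dist x s ^ 2) \<le> 2 * norm s ^ 2 + 2 * norm x ^ 2" for x
    using power2_dist_le[of x s] by simp
qed

lemma integrable_power2_infdist:
  assumes "S \<noteq> {}"
  shows "integrable \<mu> (\<lambda>x. infdist x S ^ 2)"
proof -
  obtain s0 where s0: "s0 \<in> S" using assms by auto
  show ?thesis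
  proof (rule integrable_quadratic_growth[where c="2 * norm s0 ^ 2" and d=2])
    show "(\<lambda>x. infdist x S ^ 2) \<in> borel_measurable borel"
      by (intro borel_measurable_continuous_onI continuous_intros)
    show "norm (infdist x S ^ 2) \<le> 2 * norm s0 ^ 2 + 2 * norm x ^ 2" for x
      using power2_infdist_le[OF s0, of x] power2_dist_le[of x s0] by simp
  qed
qed

lemma integrable_indicator_const: "A \<in> sets borel \<Longrightarrow> integrable \<mu> (\<lambda>x. indicator A x * (c :: real))"
  using integrable_indicator_mult_const[of A c] sets_mu by simp

lemma integrable_indicator_displacement:
  "A \<in> sets borel \<Longrightarrow> integrable \<mu> (\<lambda>x. indicator A x *\<^sub>R (x - s))"
  using integrable_mult_indicator[OF _ integrable_minus_const, of A] sets_mu by simp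

lemma integral_indicator_null_set:
  assumes "C \<in> sets borel" "measure \<mu> C = 0"
  shows "(\<integral>x. indicator C x *\<^sub>R (f x :: 'a) \<partial>\<mu>) = 0"
proof (rule integral_eq_zero_AE)
  have "C \<in> null_sets \<mu>" using assms sets_mu by (simp add: null_sets_def emeasure_eq_measure)
  from AE_not_in[OF this] show "AE x in \<mu>. indicator C x *\<^sub>R f x = 0" by eventually_elim simp
qed

lemma integral_cell_displacement:
  assumes "C \<in> sets borel"
  shows "(\<integral>x. indicator C x *\<^sub>R (x - a) \<partial>\<mu>) = (\<integral>x. indicator C x *\<^sub>R x \<partial>\<mu>) - measure \<mu> C *\<^sub>R a"
proof -
  have Cm: "C \<in> sets \<mu>" using assms sets_mu by simp
  have "(\<integral>x. indicator C x *\<^sub>R (x - a) \<partial>\<mu>) = (\<integral>x. indicator C x *\<^sub>R x - indicator C x *\<^sub>R a \<partial>\<mu>)"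
    by (simp add: scaleR_diff_right)
  also have "\<dots> = (\<integral>x. indicator C x *\<^sub>R x \<partial>\<mu>) - (\<integral>x. indicator C x *\<^sub>R a \<partial>\<mu>)"
    by (intro Bochner_Integration.integral_diff integrable_mult_indicator[OF Cm] integrable_id) simp
  also have "(\<integral>x. indicator C x *\<^sub>R a \<partial>\<mu>) = measure \<mu> C *\<^sub>R a"
    using integrable_indicator_const[OF assms, of 1] Cm by (subst integral_scaleR_left) simp_all
  finally show ?thesis .
qed

lemma integrable_power2_dist_finite_range:
  assumes "q \<in> borel_measurable borel" "finite R" "\<forall>x. q x \<in> R"
  shows "integrable \<mu> (\<lambda>x. dist x (q x) ^ 2)"
  using integrable_finite_range[OF assms(2,3), of \<mu> "\<lambda>s x. dist x s ^ 2"]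
    integrable_mult_indicator[OF _ integrable_power2_dist] vimage_singleton_borel[OF assms(1)] sets_mu
  by simp

definition real_distortion :: "'a set \<Rightarrow> real" where
  "real_distortion S = (\<integral>x. infdist x S ^ 2 \<partial>\<mu>)"

lemma real_distortion_nonneg: "real_distortion S \<ge> 0"
  unfolding real_distortion_def by (rule integral_nonneg_AE) simp

lemma distortion_eq_real_distortion:
  "S \<noteq> {} \<Longrightarrow> distortion \<mu> S = ennreal (real_distortion S)"
  unfolding distortion_def real_distortion_def
  by (rule nn_integral_eq_integral[OF integrable_power2_infdist]) simp_all

lemma real_distortion_nn_proj:
  "nn_proj \<Gamma> p \<Longrightarrow> (\<integral>x. dist x (p x) ^ 2 \<partial>\<mu>) = real_distortion \<Gamma>"
  by (simp add: real_distortion_def nn_projD(3))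

lemma opt_quantizer_iff_real_distortion:
  "opt_quantizer \<mu> N \<Gamma> \<longleftrightarrow> finite \<Gamma> \<and> \<Gamma> \<noteq> {} \<and> card \<Gamma> \<le> N \<and>
     (\<forall>\<Gamma>'. finite \<Gamma>' \<and> \<Gamma>' \<noteq> {} \<and> card \<Gamma>' \<le> N \<longrightarrow> real_distortion \<Gamma> \<le> real_distortion \<Gamma>')"
proof -
  have "distortion \<mu> \<Gamma> \<le> distortion \<mu> \<Gamma>' \<longleftrightarrow> real_distortion \<Gamma> \<le> real_distortion \<Gamma>'"
    if "\<Gamma> \<noteq> {}" "\<Gamma>' \<noteq> {}" for \<Gamma>'
    using that by (simp add: distortion_eq_real_distortion real_distortion_nonneg)
  then show ?thesis unfolding opt_quantizer_def by blast
qed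


definition self_consistent :: "('a \<Rightarrow> 'a) \<Rightarrow> 'a set \<Rightarrow> bool" where
  "self_consistent q R \<longleftrightarrow> q \<in> borel_measurable borel \<and> finite R \<and> (\<forall>x. q x \<in> R) \<and>
     (\<forall>s\<in>R. (\<integral>x. indicator (q -` {s}) x *\<^sub>R (x - s) \<partial>\<mu>) = 0)"

lemma self_consistentD:
  assumes "self_consistent q R"
  shows "q \<in> borel_measurable borel" "finite R" "\<forall>x. q x \<in> R"
    "\<And>s. s \<in> R \<Longrightarrow> (\<integral>x. indicator (q -` {s}) x *\<^sub>R (x - s) \<partial>\<mu>) = 0"
  using assms by (auto simp: self_consistent_def)

lemma self_consistent_integral_inner:
  assumes "self_consistent q R"
  shows "integrable \<mu> (\<lambda>x. inner (G (q x)) (x - q x))" "(\<integral>x. inner (G (q x)) (x - q x) \<partial>\<mu>) = 0"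
proof -
  note q = self_consistentD[OF assms]
  have C: "\<And>s. q -` {s} \<in> sets borel" by (rule vimage_singleton_borel[OF q(1)])
  have eqf: "\<And>s x. indicator (q -` {s}) x * inner (G s) (x - s) = inner (G s) (indicator (q -` {s}) x *\<^sub>R (x - s))"
    by (simp add: inner_scaleR_right)
  have i: "\<And>s. integrable \<mu> (\<lambda>x. indicator (q -` {s}) x * inner (G s) (x - s))"
    unfolding eqf using integrable_indicator_displacement[OF C] by (rule integrable_inner_right)
  show "integrable \<mu> (\<lambda>x. inner (G (q x)) (x - q x))"
    using integrable_finite_range[OF q(2,3), of \<mu> "\<lambda>s x. inner (G s) (x - s)"] i by simp
  have "(\<integral>x. inner (G (q x)) (x - q x) \<partial>\<mu>) = (\<Sum>s\<in>R. \<integral>x. indicator (q -` {s}) x * inner (G s) (x - s) \<partial>\<mu>)"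
    using integral_finite_range[OF q(2,3), of \<mu> "\<lambda>s x. inner (G s) (x - s)"] i by simp
  also have "\<dots> = (\<Sum>s\<in>R. inner (G s) (\<integral>x. indicator (q -` {s}) x *\<^sub>R (x - s) \<partial>\<mu>))"
    unfolding eqf by (intro sum.cong refl integral_inner_right integrable_indicator_displacement C)
  also have "\<dots> = 0" using q(4) by simp
  finally show "(\<integral>x. inner (G (q x)) (x - q x) \<partial>\<mu>) = 0" .
qed

text \<open>Jensen's inequality for self-consistent quantizers: integrate a subgradient inequality
  at \<open>q x\<close>; the linear term vanishes by self-consistency.\<close>
lemma self_consistent_Jensen:
  fixes \<phi> :: "'a \<Rightarrow> real"
  assumes "self_consistent q R" "convex_on UNIV \<phi>" "integrable \<mu> \<phi>"
  shows "integrable \<mu> (\<lambda>x. \<phi> (q x))" "(\<integral>x. \<phi> (q x) \<partial>\<mu>) \<le> (\<integral>x. \<phi> x \<partial>\<mu>)"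
proof -
  note q = self_consistentD[OF assms(1)]
  define G where "G s = (SOME g. \<forall>x. \<phi> s + inner g (x - s) \<le> \<phi> x)" for s
  have G: "\<phi> s + inner (G s) (x - s) \<le> \<phi> x" for s x
    using someI_ex[OF convex_on_UNIV_subgradient[OF assms(2), of s]] unfolding G_def by blast
  show i: "integrable \<mu> (\<lambda>x. \<phi> (q x))"
    by (rule integrable_finite_range[OF q(2,3)])
      (rule integrable_indicator_const[OF vimage_singleton_borel[OF q(1)]])
  note iG = self_consistent_integral_inner[OF assms(1), of G]
  have "(\<integral>x. \<phi> (q x) \<partial>\<mu>) = (\<integral>x. \<phi> (q x) + inner (G (q x)) (x - q x) \<partial>\<mu>)"
    using i iG by simp
  also have "\<dots> \<le> (\<integral>x. \<phi> x \<partial>\<mu>)"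
    by (intro integral_mono Bochner_Integration.integrable_add i iG assms(3) G)
  finally show "(\<integral>x. \<phi> (q x) \<partial>\<mu>) \<le> (\<integral>x. \<phi> x \<partial>\<mu>)" .
qed

lemma distr_finite_range:
  fixes q :: "'a \<Rightarrow> 'a"
  assumes "q \<in> borel_measurable borel" "finite R" "\<forall>x. q x \<in> R"
  shows "prob_space (distr \<mu> borel q)" "sets (distr \<mu> borel q) = sets borel"
    "emeasure (distr \<mu> borel q) R = 1" "q \<in> borel_measurable \<mu>"
proof -
  show qm: "q \<in> borel_measurable \<mu>" using assms(1) by (simp add: measurable_mu)
  show "prob_space (distr \<mu> borel q)" by (rule prob_space_distr[OF qm])
  show "sets (distr \<mu> borel q) = sets borel" by simp
  have "emeasure (distr \<mu> borel q) R = emeasure \<mu> (q -` R \<inter> space \<mu>)"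
    using finite_in_sets_borel[OF assms(2)] by (intro emeasure_distr qm) simp
  also have "q -` R \<inter> space \<mu> = space \<mu>" using assms(3) by auto
  finally show "emeasure (distr \<mu> borel q) R = 1" using emeasure_space_1 by simp
qed

lemma emeasure_distr_singleton:
  "(q :: 'a \<Rightarrow> 'a) \<in> borel_measurable borel \<Longrightarrow> emeasure (distr \<mu> borel q) {s} = emeasure \<mu> (q -` {s})"
  using finite_in_sets_borel[of "{s}"] by (subst emeasure_distr) (auto simp: measurable_mu)

lemma distr_self_consistent_in_Pcvx:
  assumes "self_consistent q R" "card R \<le> N"
  shows "distr \<mu> borel q \<in> Pcvx \<mu> N"
proof -
  note q = self_consistentD[OF assms(1)]
  note d = distr_finite_range[OF q(1-3)]
  have P1: "P1 (distr \<mu> borel q)"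
    unfolding P1_def using d finite_support_integral(1)[OF d(1,2) q(2) d(3), of norm] by auto
  have "cvx_le (distr \<mu> borel q) \<mu>"
    unfolding cvx_le_def
  proof (intro conjI P1 P1_mu allI impI)
    fix \<phi> :: "'a \<Rightarrow> real" assume cvx: "convex_on UNIV \<phi>" and i: "integrable \<mu> \<phi>"
    have \<phi>: "\<phi> \<in> borel_measurable borel" using cvx by (rule convex_on_UNIV_borel_measurable)
    show "integrable (distr \<mu> borel q) \<phi>" by (rule finite_support_integral(1)[OF d(1,2) q(2) d(3) \<phi>])
    have "(\<integral>x. \<phi> x \<partial>distr \<mu> borel q) = (\<integral>x. \<phi> (q x) \<partial>\<mu>)"
      by (rule integral_distr[OF d(4) \<phi>])
    also have "\<dots> \<le> (\<integral>x. \<phi> x \<partial>\<mu>)" by (rule self_consistent_Jensen(2)[OF assms(1) cvx i])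
    finally show "(\<integral>x. \<phi> x \<partial>distr \<mu> borel q) \<le> (\<integral>x. \<phi> x \<partial>\<mu>)" .
  qed
  then show ?thesis using d q(2) assms(2) by (auto simp: Pcvx_def PN_def)
qed

text \<open>Pythagoras: by self-consistency \<open>x - q x\<close> is orthogonal to every function of \<open>q x\<close>.\<close>
lemma second_moment_distr_self_consistent:
  assumes "self_consistent q R"
  shows "(\<integral>x. norm x ^ 2 \<partial>distr \<mu> borel q) = (\<integral>x. norm x ^ 2 \<partial>\<mu>) - (\<integral>x. dist x (q x) ^ 2 \<partial>\<mu>)"
proof -
  note q = self_consistentD[OF assms]
  have i1: "integrable \<mu> (\<lambda>x. dist x (q x) ^ 2)" by (rule integrable_power2_dist_finite_range[OF q(1-3)])
  have i2: "integrable \<mu> (\<lambda>x. norm (q x) ^ 2)"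
    by (rule integrable_finite_range[OF q(2,3)])
      (rule integrable_indicator_const[OF vimage_singleton_borel[OF q(1)]])
  note i3 = self_consistent_integral_inner[OF assms, of "\<lambda>s. 2 *\<^sub>R s"]
  have pt: "norm x ^ 2 = dist x (q x) ^ 2 + inner (2 *\<^sub>R q x) (x - q x) + norm (q x) ^ 2" for x
    using power2_dist_via_point[of x 0 "q x"] by simp
  have distr: "(\<integral>x. norm x ^ 2 \<partial>distr \<mu> borel q) = (\<integral>x. norm (q x) ^ 2 \<partial>\<mu>)"
    by (rule integral_distr[OF distr_finite_range(4)[OF q(1-3)]]) measurable
  have "(\<integral>x. norm x ^ 2 \<partial>\<mu>) =
      (\<integral>x. dist x (q x) ^ 2 + inner (2 *\<^sub>R q x) (x - q x) + norm (q x) ^ 2 \<partial>\<mu>)"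
    by (rule Bochner_Integration.integral_cong[OF refl pt])
  also have "\<dots> = (\<integral>x. dist x (q x) ^ 2 \<partial>\<mu>)
      + (\<integral>x. inner (2 *\<^sub>R q x) (x - q x) \<partial>\<mu>) + (\<integral>x. norm (q x) ^ 2 \<partial>\<mu>)"
    using i1 i2 i3(1) by simp
  finally show ?thesis using distr i3(2) by simp
qed

lemma graph_coupling:
  assumes "q \<in> borel_measurable borel"
  shows "distr \<mu> borel (\<lambda>x. (x, q x)) \<in> couplings \<mu> (distr \<mu> borel q)"
proof -
  have m: "(\<lambda>x. (x, q x)) \<in> \<mu> \<rightarrow>\<^sub>M borel"
    unfolding measurable_mu by (rule borel_measurable_Pair[OF measurable_ident_sets[OF refl] assms])
  have "distr (distr \<mu> borel (\<lambda>x. (x, q x))) borel fst = \<mu>"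
    using distr_distr[OF fst_borel_measurable m] by (simp add: o_def distr_id2 sets_mu)
  moreover have "distr (distr \<mu> borel (\<lambda>x. (x, q x))) borel snd = distr \<mu> borel q"
    using distr_distr[OF snd_borel_measurable m] by (simp add: o_def)
  ultimately show ?thesis by (simp add: couplings_def)
qed

lemma W2_distr_le:
  assumes "q \<in> borel_measurable borel" "finite R" "\<forall>x. q x \<in> R"
  shows "W2 \<mu> (distr \<mu> borel q) \<le> sqrt (\<integral>x. dist x (q x) ^ 2 \<partial>\<mu>)"
proof (rule W2_le_quadratic_cost[OF graph_coupling[OF assms(1)]])
  have m: "(\<lambda>x. (x, q x)) \<in> \<mu> \<rightarrow>\<^sub>M borel"
    unfolding measurable_mu by (rule borel_measurable_Pair[OF measurable_ident_sets[OF refl] assms(1)])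
  have "quadratic_cost (distr \<mu> borel (\<lambda>x. (x, q x))) = (\<integral>\<^sup>+ x. ennreal (dist x (q x) ^ 2) \<partial>\<mu>)"
    unfolding quadratic_cost_def
    using nn_integral_distr[OF m, of "\<lambda>z. ennreal (dist (fst z) (snd z) ^ 2)"] borel_measurable_power2_dist
    by simp
  also have "\<dots> = ennreal (\<integral>x. dist x (q x) ^ 2 \<partial>\<mu>)"
    by (rule nn_integral_eq_integral[OF integrable_power2_dist_finite_range[OF assms]]) simp
  finally show "quadratic_cost (distr \<mu> borel (\<lambda>x. (x, q x))) = ennreal (\<integral>x. dist x (q x) ^ 2 \<partial>\<mu>)" .
qed (auto intro: integral_nonneg_AE)

end

context P2_measure
begin

lemma quadratic_cost_perturbed_lower_bound:
  assumes \<pi>: "\<pi> \<in> couplings \<mu> \<eta>"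
    and \<eta>: "prob_space \<eta>" "sets \<eta> = sets borel" "finite S" "emeasure \<eta> S = 1" and \<epsilon>: "\<epsilon> \<ge> 0"
  shows "ennreal (real_distortion S + \<epsilon> * measure \<eta> {\<gamma>})
    \<le> quadratic_cost \<pi> + ennreal (\<epsilon> * measure \<mu> (voronoi_nbhd S \<gamma> \<epsilon>))"
proof -
  interpret E: prob_space \<eta> by fact
  define U where "U = voronoi_nbhd S \<gamma> \<epsilon>"
  have U: "U \<in> sets borel" unfolding U_def by (rule voronoi_nbhd_borel)
  have S: "S \<noteq> {}" using \<eta>(4) by auto
  have m\<pi>: "measurable \<pi> = measurable borel" by (intro ext measurable_cong_sets couplingsD(1)[OF \<pi>] refl)
  have infdist_m: "(\<lambda>x. ennreal (infdist x S ^ 2)) \<in> borel_measurable borel"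
    by (intro measurable_compose[OF _ measurable_ennreal] borel_measurable_continuous_onI continuous_intros)
  have pw: "ennreal (infdist (fst z) S ^ 2) + ennreal \<epsilon> * indicator {\<gamma>} (snd z)
      \<le> ennreal (dist (fst z) (snd z) ^ 2) + ennreal \<epsilon> * indicator U (fst z)" if "snd z \<in> S" for z
  proof -
    have ind: "ennreal \<epsilon> * indicator A x = ennreal (\<epsilon> * indicator A x)" for A x
      by (simp split: split_indicator)
    show ?thesis
      using ennreal_leI[OF power2_infdist_perturbed_le[OF that \<epsilon>, of "fst z" \<gamma>]] \<epsilon>
      unfolding ind U_def by (simp add: ennreal_plus)
  qed
  have "ennreal (real_distortion S) + ennreal \<epsilon> * emeasure \<eta> {\<gamma>}
      = (\<integral>\<^sup>+z. ennreal (infdist (fst z) S ^ 2) \<partial>\<pi>) + (\<integral>\<^sup>+z. ennreal \<epsilon> * indicator {\<gamma>} (snd z) \<partial>\<pi>)"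
    using nn_integral_coupling_fst[OF \<pi> infdist_m] \<eta>(2)
      nn_integral_coupling_snd[OF \<pi>, of "\<lambda>x. ennreal \<epsilon> * indicator {\<gamma>} x"]
    by (simp add: distortion_eq_real_distortion[OF S, symmetric] distortion_def nn_integral_cmult_indicator)
  also have "\<dots> = (\<integral>\<^sup>+z. ennreal (infdist (fst z) S ^ 2) + ennreal \<epsilon> * indicator {\<gamma>} (snd z) \<partial>\<pi>)"
    using measurable_compose[OF fst_borel_measurable infdist_m]
    by (intro nn_integral_add[symmetric]) (auto simp: m\<pi> intro: measurable_compose[OF snd_borel_measurable])
  also have "\<dots> \<le> (\<integral>\<^sup>+z. ennreal (dist (fst z) (snd z) ^ 2) + ennreal \<epsilon> * indicator U (fst z) \<partial>\<pi>)"
    using AE_coupling_snd[OF \<pi> AE_in_finite_support[OF \<eta>] finite_in_sets_borel[OF \<eta>(3)]] pw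
    by (intro nn_integral_mono_AE) auto
  also have "\<dots> = quadratic_cost \<pi> + (\<integral>\<^sup>+z. ennreal \<epsilon> * indicator U (fst z) \<partial>\<pi>)"
    unfolding quadratic_cost_def using borel_measurable_power2_dist U
    by (intro nn_integral_add) (auto simp: m\<pi> intro: measurable_compose[OF fst_borel_measurable])
  also have "(\<integral>\<^sup>+z. ennreal \<epsilon> * indicator U (fst z) \<partial>\<pi>) = ennreal \<epsilon> * emeasure \<mu> U"
    using nn_integral_coupling_fst[OF \<pi>, of "\<lambda>x. ennreal \<epsilon> * indicator U x"] U
    by (simp add: nn_integral_cmult_indicator sets_mu)
  finally show ?thesis
    using \<epsilon> real_distortion_nonneg[of S]
    by (simp add: U_def emeasure_eq_measure E.emeasure_eq_measure ennreal_plus ennreal_mult)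
qed

lemma W2_perturbed_lower_bound:
  assumes \<eta>: "prob_space \<eta>" "sets \<eta> = sets borel" "finite S" "emeasure \<eta> S = 1" and \<epsilon>: "\<epsilon> \<ge> 0"
  shows "real_distortion S + \<epsilon> * measure \<eta> {\<gamma>} \<le> W2 \<mu> \<eta> ^ 2 + \<epsilon> * measure \<mu> (voronoi_nbhd S \<gamma> \<epsilon>)"
proof -
  define I where "I = (INF \<pi>\<in>couplings \<mu> \<eta>. quadratic_cost \<pi>)"
  define a where "a = real_distortion S + \<epsilon> * measure \<eta> {\<gamma>}"
  define b where "b = \<epsilon> * measure \<mu> (voronoi_nbhd S \<gamma> \<epsilon>)"
  have fin: "I < \<infinity>" unfolding I_def
    by (rule INF_quadratic_cost_finite[OF prob_space_axioms \<eta>(1) sets_mu \<eta>(2)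
          nn_integral_power2_norm_finite nn_integral_power2_norm_finite_support[OF \<eta>]])
  have b0: "b \<ge> 0" unfolding b_def using \<epsilon> by simp
  have "ennreal (a - b) \<le> I"
    unfolding I_def
  proof (rule INF_greatest)
    fix \<pi> assume \<pi>: "\<pi> \<in> couplings \<mu> \<eta>"
    have h: "ennreal a \<le> quadratic_cost \<pi> + ennreal b"
      unfolding a_def b_def by (rule quadratic_cost_perturbed_lower_bound[OF \<pi> \<eta> \<epsilon>])
    show "ennreal (a - b) \<le> quadratic_cost \<pi>"
    proof (cases "quadratic_cost \<pi>" rule: ennreal_cases)
      case (real c)
      then have "ennreal a \<le> ennreal (c + b)" using h b0 by (simp add: ennreal_plus)
      moreover have "0 \<le> c + b" using real b0 by simp
      ultimately have "a \<le> c + b" using ennreal_le_iff by blast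
      then show ?thesis using real by (simp add: ennreal_leI)
    qed simp
  qed
  then have "a - b \<le> enn2real I"
  proof (cases "a - b \<ge> 0")
    case True
    then show ?thesis using enn2real_mono[OF \<open>ennreal (a - b) \<le> I\<close>] fin by simp
  qed (simp add: order_trans[OF _ enn2real_nonneg])
  then show ?thesis unfolding a_def b_def I_def by (simp add: W2_eq)
qed

lemma real_distortion_le_W2:
  assumes "prob_space \<eta>" "sets \<eta> = sets borel" "finite S" "emeasure \<eta> S = 1"
  shows "real_distortion S \<le> W2 \<mu> \<eta> ^ 2"
  using W2_perturbed_lower_bound[OF assms order_refl] by simp

lemma integrable_perturbed_tangent_max:
  assumes "finite S" "S \<noteq> {}" "\<epsilon> \<ge> 0"
  shows "integrable \<mu> (perturbed_tangent_max S \<gamma> \<epsilon>)"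
proof -
  obtain s0 where s0: "s0 \<in> S" using assms(2) by auto
  show ?thesis
  proof (rule integrable_quadratic_growth[where c="\<epsilon> + 2 * norm s0 ^ 2" and d=2])
    show "perturbed_tangent_max S \<gamma> \<epsilon> \<in> borel_measurable borel"
      by (intro convex_on_UNIV_borel_measurable convex_on_perturbed_tangent_max assms(1,2))
    fix x
    have "norm x ^ 2 - dist x s0 ^ 2 \<le> perturbed_tangent_max S \<gamma> \<epsilon> x"
      using perturbed_tangent_max_ge[OF assms(1) s0, of x \<epsilon> \<gamma>] assms(3)
      by (smt (verit) indicator_pos_le mult_nonneg_nonneg)
    moreover have "perturbed_tangent_max S \<gamma> \<epsilon> x \<le> norm x ^ 2 + \<epsilon>"
      using perturbed_tangent_max_le[OF assms, of \<gamma> x] assms(3) zero_le_power2[of "infdist x S"]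
        mult_left_le[OF indicator_le_1 assms(3), of "voronoi_nbhd S \<gamma> \<epsilon>" x]
      by linarith
    ultimately show "norm (perturbed_tangent_max S \<gamma> \<epsilon> x) \<le> \<epsilon> + 2 * norm s0 ^ 2 + 2 * norm x ^ 2"
      using power2_dist_le[of x s0] assms(3) by (simp add: abs_le_iff) (smt (verit) zero_le_power2)
  qed
qed

lemma second_moment_perturbed_upper_bound:
  assumes cvx: "cvx_le \<eta> \<mu>" and \<eta>: "prob_space \<eta>" "sets \<eta> = sets borel" "finite S" "emeasure \<eta> S = 1"
    and \<gamma>: "\<gamma> \<in> S" and \<epsilon>: "\<epsilon> \<ge> 0"
  shows "(\<integral>x. norm x ^ 2 \<partial>\<eta>) + \<epsilon> * measure \<eta> {\<gamma>}
    \<le> (\<integral>x. norm x ^ 2 \<partial>\<mu>) - real_distortion S + \<epsilon> * measure \<mu> (voronoi_nbhd S \<gamma> \<epsilon>)"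
proof -
  define \<phi> where "\<phi> = perturbed_tangent_max S \<gamma> \<epsilon>"
  define U where "U = voronoi_nbhd S \<gamma> \<epsilon>"
  have S: "S \<noteq> {}" using \<gamma> by auto
  have U: "U \<in> sets borel" unfolding U_def by (rule voronoi_nbhd_borel)
  have \<phi>_int: "integrable \<mu> \<phi>"
    unfolding \<phi>_def by (rule integrable_perturbed_tangent_max[OF \<eta>(3) S \<epsilon>])
  have \<phi>_cvx: "convex_on UNIV \<phi>"
    unfolding \<phi>_def by (rule convex_on_perturbed_tangent_max[OF \<eta>(3) S])
  then have \<phi>_meas: "\<phi> \<in> borel_measurable borel" by (rule convex_on_UNIV_borel_measurable)
  have iU: "integrable \<mu> (\<lambda>x. \<epsilon> * indicator U x)"
    using integrable_indicator_const[OF U, of \<epsilon>] by (simp add: mult.commute)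
  have "(\<Sum>s\<in>S. \<epsilon> * indicator {\<gamma>} s * measure \<eta> {s}) = (\<Sum>s\<in>S. if s = \<gamma> then \<epsilon> * measure \<eta> {\<gamma>} else 0)"
    by (intro sum.cong) (auto simp: indicator_def)
  also have "\<dots> = \<epsilon> * measure \<eta> {\<gamma>}" using \<gamma> \<eta>(3) by simp
  finally have "(\<integral>x. norm x ^ 2 \<partial>\<eta>) + \<epsilon> * measure \<eta> {\<gamma>}
      = (\<Sum>s\<in>S. (norm s ^ 2 + \<epsilon> * indicator {\<gamma>} s) * measure \<eta> {s})"
    using finite_support_integral(2)[OF \<eta>, of "\<lambda>x. norm x ^ 2"] by (simp add: distrib_right sum.distrib)
  also have "\<dots> \<le> (\<Sum>s\<in>S. \<phi> s * measure \<eta> {s})"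
  proof (intro sum_mono mult_right_mono)
    fix s assume "s \<in> S"
    show "norm s ^ 2 + \<epsilon> * indicator {\<gamma>} s \<le> \<phi> s"
      using perturbed_tangent_max_ge[OF \<eta>(3) \<open>s \<in> S\<close>, of s \<epsilon> \<gamma>] by (simp add: \<phi>_def)
  qed simp
  also have "\<dots> = (\<integral>x. \<phi> x \<partial>\<eta>)" by (rule finite_support_integral(2)[OF \<eta> \<phi>_meas, symmetric])
  also have "\<dots> \<le> (\<integral>x. \<phi> x \<partial>\<mu>)" using cvx \<phi>_cvx \<phi>_int by (simp add: cvx_le_def)
  also have "\<dots> \<le> (\<integral>x. norm x ^ 2 - infdist x S ^ 2 + \<epsilon> * indicator U x \<partial>\<mu>)"
    unfolding \<phi>_def U_def
    by (intro integral_mono Bochner_Integration.integrable_add Bochner_Integration.integrable_diff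
        integrable_power2_norm integrable_power2_infdist[OF S] perturbed_tangent_max_le[OF \<eta>(3) S \<epsilon>]
        \<phi>_int[unfolded \<phi>_def] iU[unfolded U_def])
  also have "\<dots> = (\<integral>x. norm x ^ 2 \<partial>\<mu>) - real_distortion S + \<epsilon> * measure \<mu> U"
    using integrable_power2_norm integrable_power2_infdist[OF S] iU U
    by (simp add: real_distortion_def sets_mu)
  finally show ?thesis unfolding U_def .
qed

lemma second_moment_le_of_cvx_le:
  assumes "cvx_le \<eta> \<mu>" "prob_space \<eta>" "sets \<eta> = sets borel" "finite S" "emeasure \<eta> S = 1"
  shows "(\<integral>x. norm x ^ 2 \<partial>\<eta>) \<le> (\<integral>x. norm x ^ 2 \<partial>\<mu>) - real_distortion S"
proof -
  obtain \<gamma> where "\<gamma> \<in> S" using assms(5) by (cases "S = {}") auto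
  from second_moment_perturbed_upper_bound[OF assms this order_refl] show ?thesis by simp
qed

end

context P2_measure
begin

definition cell_mean :: "('a \<Rightarrow> 'a) \<Rightarrow> 'a \<Rightarrow> 'a" where
  "cell_mean p s = (if measure \<mu> (p -` {s}) = 0 then s
     else (1 / measure \<mu> (p -` {s})) *\<^sub>R (\<integral>x. indicator (p -` {s}) x *\<^sub>R x \<partial>\<mu>))"

lemma integral_cell_eq_cell_mean:
  assumes "p \<in> borel_measurable borel"
  shows "(\<integral>x. indicator (p -` {s}) x *\<^sub>R x \<partial>\<mu>) = measure \<mu> (p -` {s}) *\<^sub>R cell_mean p s"
  using integral_indicator_null_set[OF vimage_singleton_borel[OF assms], of s "\<lambda>x. x"]
  by (cases "measure \<mu> (p -` {s}) = 0") (simp_all add: cell_mean_def)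

lemma integral_cell_displacement_cell_mean:
  assumes "p \<in> borel_measurable borel"
  shows "(\<integral>x. indicator (p -` {s}) x *\<^sub>R (x - cell_mean p s) \<partial>\<mu>) = 0"
  using integral_cell_displacement[OF vimage_singleton_borel[OF assms]] integral_cell_eq_cell_mean[OF assms]
  by simp

lemma self_consistent_lloyd:
  assumes p: "p \<in> borel_measurable borel" "\<forall>x. p x \<in> \<Gamma>" and \<Gamma>: "finite \<Gamma>"
  shows "self_consistent (\<lambda>x. cell_mean p (p x)) (cell_mean p ` \<Gamma>)"
  unfolding self_consistent_def
proof (intro conjI ballI allI)
  let ?c = "cell_mean p" and ?q = "\<lambda>x. cell_mean p (p x)"
  show "finite (?c ` \<Gamma>)" "?q x \<in> ?c ` \<Gamma>" for x using \<Gamma> p(2) by auto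
  show "?q \<in> borel_measurable borel"
  proof (rule borel_measurable_finite_range[of "?c ` \<Gamma>"])
    fix t
    have "?q -` {t} = p -` (\<Gamma> \<inter> ?c -` {t})" using p(2) by auto
    also have "\<dots> \<in> sets borel"
      using \<Gamma> by (intro measurable_sets_borel[OF p(1)] finite_in_sets_borel) simp
    finally show "?q -` {t} \<in> sets borel" .
  qed (use \<Gamma> p(2) in auto)
  fix t assume "t \<in> ?c ` \<Gamma>"
  have pw: "indicator (?q -` {t}) x *\<^sub>R (x - t)
      = (\<Sum>s\<in>\<Gamma> \<inter> ?c -` {t}. indicator (p -` {s}) x *\<^sub>R (x - ?c s))" for x
  proof -
    have "(\<Sum>s\<in>\<Gamma> \<inter> ?c -` {t}. indicator (p -` {s}) x *\<^sub>R (x - ?c s))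
        = (\<Sum>s\<in>\<Gamma> \<inter> ?c -` {t}. if p x = s then x - ?c (p x) else 0)"
      by (intro sum.cong) (auto simp: indicator_def)
    also have "\<dots> = indicator (?q -` {t}) x *\<^sub>R (x - t)"
      using \<Gamma> p(2) by (auto simp: sum.delta indicator_def)
    finally show ?thesis by simp
  qed
  have "(\<integral>x. indicator (?q -` {t}) x *\<^sub>R (x - t) \<partial>\<mu>)
      = (\<Sum>s\<in>\<Gamma> \<inter> ?c -` {t}. (\<integral>x. indicator (p -` {s}) x *\<^sub>R (x - ?c s) \<partial>\<mu>))"
    unfolding pw
    by (intro Bochner_Integration.integral_sum integrable_indicator_displacement vimage_singleton_borel p(1))
  also have "\<dots> = 0" by (intro sum.neutral ballI integral_cell_displacement_cell_mean p(1))
  finally show "(\<integral>x. indicator (?q -` {t}) x *\<^sub>R (x - t) \<partial>\<mu>) = 0" .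
qed

text \<open>Huygens' formula on each cell.\<close>
lemma real_distortion_lloyd:
  assumes p: "nn_proj \<Gamma> p" and \<Gamma>: "finite \<Gamma>"
  shows "real_distortion \<Gamma> = (\<integral>x. dist x (cell_mean p (p x)) ^ 2 \<partial>\<mu>)
    + (\<Sum>s\<in>\<Gamma>. measure \<mu> (p -` {s}) * dist (cell_mean p s) s ^ 2)"
proof -
  note pp = nn_projD[OF p]
  let ?c = "cell_mean p"
  have C: "\<And>s. p -` {s} \<in> sets borel" by (rule vimage_singleton_borel[OF pp(1)])
  have pR: "\<forall>x. p x \<in> \<Gamma>" using pp(2) by blast
  note q = self_consistentD[OF self_consistent_lloyd[OF pp(1) pR \<Gamma>]]
  have eqf: "indicator (p -` {s}) x * inner (2 *\<^sub>R (?c s - s)) (x - ?c s)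
      = inner (2 *\<^sub>R (?c s - s)) (indicator (p -` {s}) x *\<^sub>R (x - ?c s))" for s x
    by (simp add: inner_scaleR_right)
  have i2: "integrable \<mu> (\<lambda>x. indicator (p -` {s}) x * inner (2 *\<^sub>R (?c s - s)) (x - ?c s))" for s
    unfolding eqf by (intro integrable_inner_right integrable_indicator_displacement C)
  have i3: "integrable \<mu> (\<lambda>x. indicator (p -` {s}) x * dist (?c s) s ^ 2)" for s
    by (rule integrable_indicator_const[OF C])
  have I2: "(\<integral>x. inner (2 *\<^sub>R (?c (p x) - p x)) (x - ?c (p x)) \<partial>\<mu>) = 0"
  proof -
    have "(\<integral>x. inner (2 *\<^sub>R (?c (p x) - p x)) (x - ?c (p x)) \<partial>\<mu>)
        = (\<Sum>s\<in>\<Gamma>. \<integral>x. indicator (p -` {s}) x * inner (2 *\<^sub>R (?c s - s)) (x - ?c s) \<partial>\<mu>)"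
      using integral_finite_range[OF \<Gamma> pR, of \<mu> "\<lambda>s x. inner (2 *\<^sub>R (?c s - s)) (x - ?c s)"] i2 by simp
    also have "\<dots> = (\<Sum>s\<in>\<Gamma>. inner (2 *\<^sub>R (?c s - s)) (\<integral>x. indicator (p -` {s}) x *\<^sub>R (x - ?c s) \<partial>\<mu>))"
      unfolding eqf by (intro sum.cong refl integral_inner_right integrable_indicator_displacement C)
    also have "\<dots> = 0" by (simp add: integral_cell_displacement_cell_mean[OF pp(1)])
    finally show ?thesis .
  qed
  have I3: "(\<integral>x. dist (?c (p x)) (p x) ^ 2 \<partial>\<mu>) = (\<Sum>s\<in>\<Gamma>. measure \<mu> (p -` {s}) * dist (?c s) s ^ 2)"
    using integral_finite_range[OF \<Gamma> pR, of \<mu> "\<lambda>s x. dist (?c s) s ^ 2"] i3 C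
    by (simp add: sets_mu mult.commute)
  have i2': "integrable \<mu> (\<lambda>x. inner (2 *\<^sub>R (?c (p x) - p x)) (x - ?c (p x)))"
    using integrable_finite_range[OF \<Gamma> pR, of \<mu> "\<lambda>s x. inner (2 *\<^sub>R (?c s - s)) (x - ?c s)"] i2 by simp
  have i3': "integrable \<mu> (\<lambda>x. dist (?c (p x)) (p x) ^ 2)"
    using integrable_finite_range[OF \<Gamma> pR, of \<mu> "\<lambda>s x. dist (?c s) s ^ 2"] i3 by simp
  have "real_distortion \<Gamma> = (\<integral>x. dist x (p x) ^ 2 \<partial>\<mu>)" by (simp add: real_distortion_nn_proj[OF p])
  also have "\<dots> = (\<integral>x. dist x (?c (p x)) ^ 2 + inner (2 *\<^sub>R (?c (p x) - p x)) (x - ?c (p x))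
      + dist (?c (p x)) (p x) ^ 2 \<partial>\<mu>)"
    by (rule Bochner_Integration.integral_cong[OF refl power2_dist_via_point])
  also have "\<dots> = (\<integral>x. dist x (?c (p x)) ^ 2 \<partial>\<mu>) + (\<integral>x. inner (2 *\<^sub>R (?c (p x) - p x)) (x - ?c (p x)) \<partial>\<mu>)
      + (\<integral>x. dist (?c (p x)) (p x) ^ 2 \<partial>\<mu>)"
    using integrable_power2_dist_finite_range[OF q(1-3)] i2' i3' by simp
  finally show ?thesis using I2 I3 by simp
qed

lemma ex_self_consistent_le_real_distortion:
  assumes "finite \<Gamma>" "\<Gamma> \<noteq> {}"
  shows "\<exists>q R. self_consistent q R \<and> card R \<le> card \<Gamma> \<and> (\<integral>x. dist x (q x) ^ 2 \<partial>\<mu>) \<le> real_distortion \<Gamma>"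
proof -
  obtain p where p: "nn_proj \<Gamma> p" using ex_nn_proj[OF assms] by blast
  have "(\<Sum>s\<in>\<Gamma>. measure \<mu> (p -` {s}) * dist (cell_mean p s) s ^ 2) \<ge> 0" by (intro sum_nonneg) simp
  then have "(\<integral>x. dist x (cell_mean p (p x)) ^ 2 \<partial>\<mu>) \<le> real_distortion \<Gamma>"
    using real_distortion_lloyd[OF p assms(1)] by simp
  moreover have "self_consistent (\<lambda>x. cell_mean p (p x)) (cell_mean p ` \<Gamma>)"
    using nn_projD[OF p] assms(1) by (intro self_consistent_lloyd) auto
  ultimately show ?thesis using card_image_le[OF assms(1)] by blast
qed

lemma real_distortion_opt_quantizer_le:
  assumes "opt_quantizer \<mu> N \<Gamma>" "finite \<Gamma>'" "\<Gamma>' \<noteq> {}" "card \<Gamma>' \<le> N"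
  shows "real_distortion \<Gamma> \<le> real_distortion \<Gamma>'"
  using assms by (simp add: opt_quantizer_iff_real_distortion)

text \<open>For an optimal grid the Lloyd step cannot decrease the distortion, so all displacements
  of cells of positive mass vanish.\<close>
lemma opt_quantizer_nn_proj_self_consistent:
  assumes opt: "opt_quantizer \<mu> N \<Gamma>" and p: "nn_proj \<Gamma> p"
  shows "self_consistent p \<Gamma>"
proof -
  have \<Gamma>: "finite \<Gamma>" "\<Gamma> \<noteq> {}" "card \<Gamma> \<le> N" using opt by (auto simp: opt_quantizer_def)
  note pp = nn_projD[OF p]
  let ?c = "cell_mean p" and ?m = "\<lambda>s. measure \<mu> (p -` {s})"
  have pR: "\<forall>x. p x \<in> \<Gamma>" using pp(2) by blast
  note q = self_consistentD[OF self_consistent_lloyd[OF pp(1) pR \<Gamma>(1)]]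
  have "real_distortion \<Gamma> \<le> real_distortion (?c ` \<Gamma>)"
    using \<Gamma> card_image_le[OF \<Gamma>(1), of ?c] by (intro real_distortion_opt_quantizer_le[OF opt]) auto
  also have "\<dots> \<le> (\<integral>x. dist x (?c (p x)) ^ 2 \<partial>\<mu>)"
    unfolding real_distortion_def
    using q(3) \<Gamma>(2) by (intro integral_mono integrable_power2_infdist integrable_power2_dist_finite_range[OF q(1-3)]
        power2_infdist_le) auto
  finally have "(\<Sum>s\<in>\<Gamma>. ?m s * dist (?c s) s ^ 2) \<le> 0"
    using real_distortion_lloyd[OF p \<Gamma>(1)] by simp
  then have "\<forall>s\<in>\<Gamma>. ?m s * dist (?c s) s ^ 2 = 0"
    using sum_nonneg_eq_0_iff[OF \<Gamma>(1)] by (metis (no_types, lifting) antisym measure_nonneg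
        mult_nonneg_nonneg sum_nonneg zero_le_power2)
  then have "?m s *\<^sub>R ?c s = ?m s *\<^sub>R s" if "s \<in> \<Gamma>" for s using that by auto
  then show ?thesis
    unfolding self_consistent_def
    using integral_cell_displacement[OF vimage_singleton_borel[OF pp(1)]] integral_cell_eq_cell_mean[OF pp(1)]
    by (simp add: \<Gamma>(1) pR pp(1))
qed

end

context P2_measure
begin

text \<open>On the bisector of \<open>\<gamma>\<close> and \<open>\<gamma>'\<close> the function \<open>inner (\<gamma>' - \<gamma>) (x - \<gamma>')\<close> is the constant
  \<open>-(norm (\<gamma>' - \<gamma>))\<^sup>2 / 2\<close>.\<close>
lemma measure_bisector_null:
  assumes B: "B \<in> sets borel" "\<And>x. x \<in> B \<Longrightarrow> dist x \<gamma> = dist x \<gamma>'" and "\<gamma> \<noteq> \<gamma>'"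
    and int: "(\<integral>x. indicator B x *\<^sub>R (x - \<gamma>') \<partial>\<mu>) = 0"
  shows "measure \<mu> B = 0"
proof -
  define w where "w = \<gamma>' - \<gamma>"
  have pw: "indicator B x * inner w (x - \<gamma>') = indicator B x * (- (norm w ^ 2 / 2))" for x
  proof (cases "x \<in> B")
    case True
    have "norm (x - \<gamma>) ^ 2 = norm ((x - \<gamma>') + w) ^ 2" by (simp add: w_def)
    also have "\<dots> = norm (x - \<gamma>') ^ 2 + 2 * inner w (x - \<gamma>') + norm w ^ 2"
      by (simp add: power2_norm_eq_inner inner_add_left inner_add_right inner_commute)
    finally have "norm (x - \<gamma>) ^ 2 = norm (x - \<gamma>') ^ 2 + 2 * inner w (x - \<gamma>') + norm w ^ 2" .
    then have "inner w (x - \<gamma>') = - (norm w ^ 2 / 2)" using B(2)[OF True] by (simp add: dist_norm)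
    then show ?thesis by simp
  qed simp
  have "(\<integral>x. indicator B x * inner w (x - \<gamma>') \<partial>\<mu>) = inner w (\<integral>x. indicator B x *\<^sub>R (x - \<gamma>') \<partial>\<mu>)"
    by (subst integral_inner_right[symmetric])
      (auto intro: integrable_indicator_displacement[OF B(1)] simp: inner_scaleR_right)
  then have "(\<integral>x. indicator B x * (- (norm w ^ 2 / 2)) \<partial>\<mu>) = 0" by (simp only: pw int) simp
  then have "measure \<mu> B * (norm w ^ 2 / 2) = 0" using B(1) by (simp add: sets_mu)
  then show ?thesis using assms(3) by (simp add: w_def)
qed

text \<open>Listing \<open>\<gamma>\<close> before or after \<open>\<gamma>'\<close> gives two nearest-neighbour projections, both
  self-consistent; their cells at \<open>\<gamma>'\<close> differ exactly by the common boundary.\<close>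
lemma opt_quantizer_voronoi_boundary_null:
  assumes opt: "opt_quantizer \<mu> N \<Gamma>" and \<gamma>: "\<gamma> \<in> \<Gamma>" "\<gamma>' \<in> \<Gamma>" "\<gamma> \<noteq> \<gamma>'"
  shows "measure \<mu> (voronoi_cell \<Gamma> \<gamma> \<inter> voronoi_cell \<Gamma> \<gamma>') = 0"
proof -
  let ?V = "voronoi_cell \<Gamma>"
  have \<Gamma>: "finite \<Gamma>" using opt by (simp add: opt_quantizer_def)
  obtain rest where rest: "set rest = \<Gamma> - {\<gamma>, \<gamma>'}" "distinct rest"
    using finite_distinct_list[of "\<Gamma> - {\<gamma>, \<gamma>'}"] \<Gamma> by auto
  define xs1 xs2 where "xs1 = \<gamma> # \<gamma>' # rest" and "xs2 = \<gamma>' # \<gamma> # rest"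
  have xs: "distinct xs1" "distinct xs2" "xs1 \<noteq> []" "xs2 \<noteq> []" "set xs1 = \<Gamma>" "set xs2 = \<Gamma>"
    using rest \<gamma> by (auto simp: xs1_def xs2_def)
  have cell1: "first_nearest xs1 -` {\<gamma>'} = ?V \<gamma>' - ?V \<gamma>"
  proof -
    have "first_nearest xs1 x = xs1 ! 1 \<longleftrightarrow>
        x \<in> voronoi_cell (set xs1) (xs1 ! 1) \<and> (\<forall>j<1. x \<notin> voronoi_cell (set xs1) (xs1 ! j))" for x
      by (rule first_nearest_eq_iff[OF xs(3,1)]) (simp add: xs1_def)
    then show ?thesis using xs(5) by (auto simp: xs1_def)
  qed
  have cell2: "first_nearest xs2 -` {\<gamma>'} = ?V \<gamma>'"
  proof -
    have "first_nearest xs2 x = xs2 ! 0 \<longleftrightarrow>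
        x \<in> voronoi_cell (set xs2) (xs2 ! 0) \<and> (\<forall>j<0. x \<notin> voronoi_cell (set xs2) (xs2 ! j))" for x
      by (rule first_nearest_eq_iff[OF xs(4,2)]) (simp add: xs2_def)
    then show ?thesis using xs(6) by (auto simp: xs2_def)
  qed
  have "self_consistent (first_nearest xs1) \<Gamma>" "self_consistent (first_nearest xs2) \<Gamma>"
    using opt_quantizer_nn_proj_self_consistent[OF opt] nn_proj_first_nearest xs by metis+
  then have b1: "(\<integral>x. indicator (?V \<gamma>' - ?V \<gamma>) x *\<^sub>R (x - \<gamma>') \<partial>\<mu>) = 0"
    and b2: "(\<integral>x. indicator (?V \<gamma>') x *\<^sub>R (x - \<gamma>') \<partial>\<mu>) = 0"
    using self_consistentD(4) \<gamma>(2) cell1 cell2 by metis+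
  define B where "B = ?V \<gamma> \<inter> ?V \<gamma>'"
  have Bs: "B \<in> sets borel" unfolding B_def by (intro sets.Int voronoi_cell_borel)
  have "indicator (?V \<gamma>') x = indicator (?V \<gamma>' - ?V \<gamma>) x + (indicator B x :: real)" for x
    by (auto simp: indicator_def B_def)
  then have "(\<integral>x. indicator (?V \<gamma>') x *\<^sub>R (x - \<gamma>') \<partial>\<mu>)
      = (\<integral>x. indicator (?V \<gamma>' - ?V \<gamma>) x *\<^sub>R (x - \<gamma>') \<partial>\<mu>) + (\<integral>x. indicator B x *\<^sub>R (x - \<gamma>') \<partial>\<mu>)"
    by (simp add: scaleR_add_left integrable_indicator_displacement Bs voronoi_cell_borel sets.Diff)
  then have int: "(\<integral>x. indicator B x *\<^sub>R (x - \<gamma>') \<partial>\<mu>) = 0" using b1 b2 by simp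
  have "measure \<mu> B = 0"
    by (rule measure_bisector_null[OF Bs _ \<gamma>(3) int]) (auto simp: B_def voronoi_cell_def)
  then show ?thesis by (simp add: B_def)
qed

lemma opt_quantizer_voronoi_cell_le_projection:
  assumes opt: "opt_quantizer \<mu> N \<Gamma>" and p: "nn_proj \<Gamma> p" and \<gamma>: "\<gamma> \<in> \<Gamma>"
  shows "measure \<mu> (voronoi_cell \<Gamma> \<gamma>) \<le> measure \<mu> (p -` {\<gamma>})"
proof -
  let ?V = "voronoi_cell \<Gamma>"
  have \<Gamma>: "finite \<Gamma>" using opt by (simp add: opt_quantizer_def)
  note pp = nn_projD[OF p]
  define B where "B = (\<Union>t\<in>\<Gamma> - {\<gamma>}. ?V \<gamma> \<inter> ?V t)"
  have C: "p -` {\<gamma>} \<in> sets \<mu>" using vimage_singleton_borel[OF pp(1)] sets_mu by simp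
  have B: "B \<in> sets \<mu>" unfolding B_def sets_mu using \<Gamma> by (intro sets.finite_UN sets.Int voronoi_cell_borel) auto
  have "?V \<gamma> \<subseteq> p -` {\<gamma>} \<union> B"
    using pp(2,4) by (auto simp: B_def)
  then have "measure \<mu> (?V \<gamma>) \<le> measure \<mu> (p -` {\<gamma>} \<union> B)"
    using C B by (intro finite_measure_mono) auto
  also have "\<dots> \<le> measure \<mu> (p -` {\<gamma>}) + measure \<mu> B"
    using C B by (intro measure_subadditive) (auto simp: emeasure_eq_measure)
  also have "measure \<mu> B \<le> (\<Sum>t\<in>\<Gamma> - {\<gamma>}. measure \<mu> (?V \<gamma> \<inter> ?V t))"
    unfolding B_def using \<Gamma> by (intro measure_UNION_le) (auto intro: sets.Int voronoi_cell_borel simp: sets_mu)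
  also have "\<dots> = 0" using opt_quantizer_voronoi_boundary_null[OF opt \<gamma>] by (intro sum.neutral) auto
  finally show ?thesis by simp
qed

lemma measure_voronoi_cell_ge:
  assumes \<gamma>: "\<gamma> \<in> \<Gamma>" and le: "\<And>\<epsilon>. \<epsilon> > 0 \<Longrightarrow> a \<le> measure \<mu> (voronoi_nbhd \<Gamma> \<gamma> \<epsilon>)"
  shows "a \<le> measure \<mu> (voronoi_cell \<Gamma> \<gamma>)"
proof -
  let ?A = "\<lambda>n. voronoi_nbhd \<Gamma> \<gamma> (1 / Suc n)"
  have "range ?A \<subseteq> sets \<mu>" using voronoi_nbhd_borel by (auto simp: sets_mu)
  moreover have "decseq ?A"
    by (intro decseq_SucI voronoi_nbhd_antimono) (simp add: frac_le)
  ultimately have "(\<lambda>n. measure \<mu> (?A n)) \<longlonglongrightarrow> measure \<mu> (voronoi_cell \<Gamma> \<gamma>)"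
    using finite_Lim_measure_decseq voronoi_cell_eq_INT_voronoi_nbhd[OF \<gamma>] by simp
  then show ?thesis by (rule LIMSEQ_le_const) (use le in auto)
qed

end

context P2_measure
begin

lemma nn_integral_finite_range:
  fixes q :: "'a \<Rightarrow> 'a"
  assumes q: "q \<in> borel_measurable borel" "finite R" "\<forall>x. q x \<in> R"
    and f: "\<And>s. f s \<in> borel_measurable borel"
  shows "(\<Sum>s\<in>R. \<integral>\<^sup>+y. f s y * indicator (q -` {s}) y \<partial>\<mu>) = (\<integral>\<^sup>+y. f (q y) y \<partial>\<mu>)"
proof -
  have "(\<Sum>s\<in>R. \<integral>\<^sup>+y. f s y * indicator (q -` {s}) y \<partial>\<mu>) = (\<integral>\<^sup>+y. (\<Sum>s\<in>R. f s y * indicator (q -` {s}) y) \<partial>\<mu>)"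
    using f vimage_singleton_borel[OF q(1)] by (intro nn_integral_sum[symmetric]) (simp add: measurable_mu)
  also have "\<dots> = (\<integral>\<^sup>+y. f (q y) y \<partial>\<mu>)"
    using sum_indicator_level_set[OF q(2,3), of f] by (simp add: mult.commute)
  finally show ?thesis .
qed

text \<open>The conditional law of \<open>\<mu>\<close> given \<open>q = s\<close>.\<close>
definition cell_kernel :: "('a \<Rightarrow> 'a) \<Rightarrow> 'a \<Rightarrow> 'a measure" where
  "cell_kernel q s = (if measure \<mu> (q -` {s}) \<noteq> 0
     then density \<mu> (\<lambda>y. ennreal (indicator (q -` {s}) y / measure \<mu> (q -` {s})))
     else return borel s)"

lemma sets_cell_kernel: "sets (cell_kernel q s) = sets borel"
  by (simp add: cell_kernel_def sets_mu)

lemma nn_integral_cell_kernel: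
  assumes q: "q \<in> borel_measurable borel" and m: "measure \<mu> (q -` {s}) \<noteq> 0"
    and f: "f \<in> borel_measurable borel"
  shows "(\<integral>\<^sup>+y. f y \<partial>cell_kernel q s)
    = ennreal (1 / measure \<mu> (q -` {s})) * (\<integral>\<^sup>+y. f y * indicator (q -` {s}) y \<partial>\<mu>)"
proof -
  let ?m = "measure \<mu> (q -` {s})"
  have C: "q -` {s} \<in> sets \<mu>" using vimage_singleton_borel[OF q] sets_mu by simp
  have "(\<integral>\<^sup>+y. f y \<partial>cell_kernel q s) = (\<integral>\<^sup>+y. ennreal (indicator (q -` {s}) y / ?m) * f y \<partial>\<mu>)"
    using m C f by (simp add: cell_kernel_def nn_integral_density measurable_mu)
  also have "\<dots> = (\<integral>\<^sup>+y. ennreal (1 / ?m) * (f y * indicator (q -` {s}) y) \<partial>\<mu>)"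
    by (intro nn_integral_cong) (simp split: split_indicator)
  also have "\<dots> = ennreal (1 / ?m) * (\<integral>\<^sup>+y. f y * indicator (q -` {s}) y \<partial>\<mu>)"
    using C f by (intro nn_integral_cmult) (simp add: measurable_mu)
  finally show ?thesis .
qed

lemma nn_integral_cell_kernel_mult:
  assumes q: "q \<in> borel_measurable borel" and f: "f \<in> borel_measurable borel"
  shows "(\<integral>\<^sup>+y. f y \<partial>cell_kernel q s) * emeasure \<mu> (q -` {s}) = (\<integral>\<^sup>+y. f y * indicator (q -` {s}) y \<partial>\<mu>)"
proof (cases "measure \<mu> (q -` {s}) = 0")
  case True
  have "q -` {s} \<in> null_sets \<mu>"
    using True vimage_singleton_borel[OF q] by (simp add: null_sets_def emeasure_eq_measure sets_mu)
  from AE_not_in[OF this] have "(\<integral>\<^sup>+y. f y * indicator (q -` {s}) y \<partial>\<mu>) = (\<integral>\<^sup>+y. 0 \<partial>\<mu>)"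
    by (intro nn_integral_cong_AE) (auto elim!: eventually_mono)
  then show ?thesis using True by (simp add: emeasure_eq_measure)
next
  case False
  then have "ennreal (1 / measure \<mu> (q -` {s})) * emeasure \<mu> (q -` {s}) = 1"
    using measure_nonneg[of \<mu> "q -` {s}"] by (simp add: emeasure_eq_measure flip: ennreal_mult)
  then show ?thesis
    by (simp add: nn_integral_cell_kernel[OF q False f] mult.commute flip: mult.assoc)
qed

lemma prob_space_cell_kernel:
  assumes q: "q \<in> borel_measurable borel"
  shows "prob_space (cell_kernel q s)"
proof (cases "measure \<mu> (q -` {s}) = 0")
  case False
  have "emeasure (cell_kernel q s) (space (cell_kernel q s))
      = ennreal (1 / measure \<mu> (q -` {s})) * emeasure \<mu> (q -` {s})"
    using nn_integral_cell_kernel[OF q False, of "\<lambda>_. 1"] vimage_singleton_borel[OF q] by (simp add: sets_mu)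
  also have "\<dots> = 1"
    using False measure_nonneg[of \<mu> "q -` {s}"] by (simp add: emeasure_eq_measure flip: ennreal_mult)
  finally show ?thesis by (rule prob_spaceI)
qed (simp add: cell_kernel_def prob_space_return)

lemma cell_kernel_measurable:
  assumes q: "q \<in> borel_measurable borel" "finite R" "\<forall>x. q x \<in> R"
  shows "cell_kernel q \<in> borel \<rightarrow>\<^sub>M prob_algebra borel"
proof (rule measurableI)
  show "cell_kernel q x \<in> space (prob_algebra borel)" for x
    using prob_space_cell_kernel[OF q(1)] sets_cell_kernel by (simp add: space_prob_algebra)
  define F where "F = {s. measure \<mu> (q -` {s}) \<noteq> 0}"
  have "F \<subseteq> R"
  proof
    fix s assume "s \<in> F"
    then have "q -` {s} \<noteq> {}" by (auto simp: F_def)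
    then show "s \<in> R" using q(3) by auto
  qed
  then have F: "finite F" using q(2) finite_subset by blast
  fix A assume A: "A \<in> sets (prob_algebra (borel :: 'a measure))"
  have "cell_kernel q -` A \<inter> space borel = (F \<inter> cell_kernel q -` A) \<union> (return borel -` A - F)"
    by (auto simp: cell_kernel_def F_def)
  also have "\<dots> \<in> sets borel"
    using F measurable_sets[OF measurable_return_prob_space A]
    by (intro sets.Un sets.Diff finite_in_sets_borel[of F] finite_in_sets_borel[of "F \<inter> _"]) auto
  finally show "cell_kernel q -` A \<inter> space borel \<in> sets borel" .
qed

lemma integral_cell_kernel:
  assumes q: "q \<in> borel_measurable borel" and m: "measure \<mu> (q -` {s}) \<noteq> 0"
  shows "integrable (cell_kernel q s) (\<lambda>y. y)" "(\<integral>y. y \<partial>cell_kernel q s) = cell_mean q s"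
proof -
  let ?m = "measure \<mu> (q -` {s})" and ?C = "q -` {s}"
  define g where "g y = indicator ?C y / ?m" for y
  have C: "?C \<in> sets \<mu>" using vimage_singleton_borel[OF q] sets_mu by simp
  have g: "g \<in> borel_measurable \<mu>" "AE y in \<mu>. 0 \<le> g y" unfolding g_def using C by auto
  have K: "cell_kernel q s = density \<mu> (\<lambda>y. ennreal (g y))" using m by (simp add: cell_kernel_def g_def)
  have gy: "(\<lambda>y. g y *\<^sub>R y) = (\<lambda>y. (1 / ?m) *\<^sub>R (indicator ?C y *\<^sub>R y))" by (auto simp: g_def)
  have "integrable \<mu> (\<lambda>y. g y *\<^sub>R y)"
    unfolding gy by (intro integrable_scaleR_right integrable_mult_indicator[OF C integrable_id])
  moreover have id: "(\<lambda>y. y) \<in> borel_measurable \<mu>" by simp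
  ultimately show "integrable (cell_kernel q s) (\<lambda>y. y)" unfolding K using integrable_density[OF id g] by simp
  have "(\<integral>y. y \<partial>cell_kernel q s) = (\<integral>y. g y *\<^sub>R y \<partial>\<mu>)" unfolding K by (rule integral_density[OF id g])
  also have "\<dots> = cell_mean q s" using m by (simp only: gy integral_scaleR_right) (simp add: cell_mean_def)
  finally show "(\<integral>y. y \<partial>cell_kernel q s) = cell_mean q s" .
qed

lemma self_consistent_cell_mean:
  assumes "self_consistent q R" "s \<in> R"
  shows "cell_mean q s = s"
proof -
  note q = self_consistentD[OF assms(1)]
  have "measure \<mu> (q -` {s}) *\<^sub>R cell_mean q s = measure \<mu> (q -` {s}) *\<^sub>R s"
    using q(4)[OF assms(2)] integral_cell_displacement[OF vimage_singleton_borel[OF q(1)], of s s]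
      integral_cell_eq_cell_mean[OF q(1), of s] by simp
  then show ?thesis by (auto simp: cell_mean_def)
qed

lemma prob_kernel_cell_kernel:
  assumes q: "q \<in> borel_measurable borel" "finite R" "\<forall>x. q x \<in> R"
  shows "prob_kernel (distr \<mu> borel q) (cell_kernel q)"
  using distr_finite_range[OF q] cell_kernel_measurable[OF q]
  by (simp add: prob_kernel_def cong: measurable_cong_sets)

lemma distr_snd_cell_kernel_coupling:
  assumes q: "q \<in> borel_measurable borel" "finite R" "\<forall>x. q x \<in> R"
  shows "distr (kernel_coupling (distr \<mu> borel q) (cell_kernel q)) borel snd = \<mu>"
proof (rule measure_eqI)
  interpret prob_kernel "distr \<mu> borel q" "cell_kernel q" by (rule prob_kernel_cell_kernel[OF q])
  note d = distr_finite_range[OF q]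
  show "sets (distr (kernel_coupling (distr \<mu> borel q) (cell_kernel q)) borel snd) = sets \<mu>"
    by (simp add: sets_mu)
  fix B assume "B \<in> sets (distr (kernel_coupling (distr \<mu> borel q) (cell_kernel q)) borel snd)"
  then have B: "B \<in> sets borel" by simp
  have "emeasure (distr (kernel_coupling (distr \<mu> borel q) (cell_kernel q)) borel snd) B
      = (\<Sum>s\<in>R. emeasure (cell_kernel q s) B * emeasure \<mu> (q -` {s}))"
    using emeasure_distr_snd_kernel_coupling[OF B] nn_integral_finite_support[OF d(1,2) q(2) d(3)]
    by (simp add: emeasure_distr_singleton[OF q(1)])
  also have "\<dots> = (\<Sum>s\<in>R. \<integral>\<^sup>+y. indicator B y * indicator (q -` {s}) y \<partial>\<mu>)"
    using nn_integral_cell_kernel_mult[OF q(1) borel_measurable_indicator[OF B]] B sets_cell_kernel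
    by (intro sum.cong refl) simp
  also have "\<dots> = emeasure \<mu> B"
    using nn_integral_finite_range[OF q, of "\<lambda>_. indicator B"] B by (simp add: sets_mu)
  finally show "emeasure (distr (kernel_coupling (distr \<mu> borel q) (cell_kernel q)) borel snd) B = emeasure \<mu> B" .
qed

lemma cell_kernel_coupling_in_mart_couplings:
  assumes sc: "self_consistent q R"
  shows "kernel_coupling (distr \<mu> borel q) (cell_kernel q) \<in> mart_couplings (distr \<mu> borel q) \<mu>"
proof -
  note q = self_consistentD[OF sc]
  interpret prob_kernel "distr \<mu> borel q" "cell_kernel q" by (rule prob_kernel_cell_kernel[OF q(1-3)])
  note d = distr_finite_range[OF q(1-3)]
  have "AE x in distr \<mu> borel q. x \<in> R \<and> measure \<mu> (q -` {x}) \<noteq> 0"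
  proof -
    have "AE x in distr \<mu> borel q. measure \<mu> (q -` {x}) = 0 \<longrightarrow> x \<noteq> s" for s
    proof (cases "measure \<mu> (q -` {s}) = 0")
      case True
      then have "{s} \<in> null_sets (distr \<mu> borel q)"
        by (simp add: null_sets_def emeasure_distr_singleton[OF q(1)] emeasure_eq_measure)
      from AE_not_in[OF this] show ?thesis by eventually_elim auto
    qed (auto intro: AE_I2)
    then have "AE x in distr \<mu> borel q. \<forall>s\<in>R. measure \<mu> (q -` {x}) = 0 \<longrightarrow> x \<noteq> s"
      by (intro AE_finite_allI[OF q(2)])
    with AE_in_finite_support[OF d(1,2) q(2) d(3)] show ?thesis by eventually_elim auto
  qed
  then have "AE x in distr \<mu> borel q. integrable (cell_kernel q x) (\<lambda>y. y) \<and> (\<integral>y. y \<partial>cell_kernel q x) = x"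
    by eventually_elim (simp add: integral_cell_kernel[OF q(1)] self_consistent_cell_mean[OF sc])
  moreover have "kernel_coupling (distr \<mu> borel q) (cell_kernel q) \<in> couplings (distr \<mu> borel q) \<mu>"
    using sets_kernel_coupling distr_fst_kernel_coupling distr_snd_cell_kernel_coupling[OF q(1-3)]
    by (simp add: couplings_def)
  ultimately show ?thesis
    using measurable_kernel unfolding mart_couplings_def kernel_coupling_def by blast
qed

lemma quadratic_cost_cell_kernel_coupling:
  assumes q: "q \<in> borel_measurable borel" "finite R" "\<forall>x. q x \<in> R"
  shows "quadratic_cost (kernel_coupling (distr \<mu> borel q) (cell_kernel q)) = ennreal (\<integral>x. dist x (q x) ^ 2 \<partial>\<mu>)"
proof -
  interpret prob_kernel "distr \<mu> borel q" "cell_kernel q" by (rule prob_kernel_cell_kernel[OF q])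
  note d = distr_finite_range[OF q]
  have dist: "(\<lambda>y. ennreal (dist s y ^ 2)) \<in> borel_measurable borel" for s :: 'a
    by (intro measurable_compose[OF _ measurable_ennreal] borel_measurable_continuous_onI continuous_intros)
  have "quadratic_cost (kernel_coupling (distr \<mu> borel q) (cell_kernel q))
      = (\<Sum>s\<in>R. (\<integral>\<^sup>+ y. ennreal (dist s y ^ 2) \<partial>cell_kernel q s) * emeasure \<mu> (q -` {s}))"
    using quadratic_cost_kernel_coupling nn_integral_finite_support[OF d(1,2) q(2) d(3)]
    by (simp add: emeasure_distr_singleton[OF q(1)])
  also have "\<dots> = (\<Sum>s\<in>R. \<integral>\<^sup>+ y. ennreal (dist s y ^ 2) * indicator (q -` {s}) y \<partial>\<mu>)"
    using nn_integral_cell_kernel_mult[OF q(1) dist] by simp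
  also have "\<dots> = (\<integral>\<^sup>+ y. ennreal (dist y (q y) ^ 2) \<partial>\<mu>)"
    using nn_integral_finite_range[OF q, of "\<lambda>s y. ennreal (dist s y ^ 2)"] dist by (simp add: dist_commute)
  also have "\<dots> = ennreal (\<integral>x. dist x (q x) ^ 2 \<partial>\<mu>)"
    by (rule nn_integral_eq_integral[OF integrable_power2_dist_finite_range[OF q]]) simp
  finally show ?thesis .
qed

end

context P2_measure
begin

lemma PcvxE:
  assumes "\<eta> \<in> Pcvx \<mu> N"
  obtains S where "prob_space \<eta>" "sets \<eta> = sets borel" "finite S" "S \<noteq> {}" "card S \<le> N"
    "emeasure \<eta> S = 1" "cvx_le \<eta> \<mu>"
proof -
  from assms obtain S where "prob_space \<eta>" "sets \<eta> = sets borel" "finite S" "card S \<le> N"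
    "emeasure \<eta> S = 1" "cvx_le \<eta> \<mu>" by (auto simp: Pcvx_def PN_def)
  moreover from this(5) have "S \<noteq> {}" by auto
  ultimately show ?thesis using that by blast
qed

lemma Pcvx_W2_lower_bound:
  assumes "\<eta> \<in> Pcvx \<mu> N" "opt_quantizer \<mu> N \<Gamma>"
  shows "sqrt (real_distortion \<Gamma>) \<le> W2 \<mu> \<eta>"
proof -
  obtain S where S: "prob_space \<eta>" "sets \<eta> = sets borel" "finite S" "S \<noteq> {}" "card S \<le> N"
    "emeasure \<eta> S = 1" using PcvxE[OF assms(1)] by metis
  have "real_distortion \<Gamma> \<le> real_distortion S" by (rule real_distortion_opt_quantizer_le[OF assms(2) S(3-5)])
  also have "\<dots> \<le> W2 \<mu> \<eta> ^ 2" by (rule real_distortion_le_W2[OF S(1-3,6)])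
  finally show ?thesis using W2_nonneg real_le_lsqrt by blast
qed

lemma Pcvx_second_moment_upper_bound:
  assumes "\<eta> \<in> Pcvx \<mu> N" "opt_quantizer \<mu> N \<Gamma>"
  shows "(\<integral>x. norm x ^ 2 \<partial>\<eta>) \<le> (\<integral>x. norm x ^ 2 \<partial>\<mu>) - real_distortion \<Gamma>"
proof -
  obtain S where S: "prob_space \<eta>" "sets \<eta> = sets borel" "finite S" "S \<noteq> {}" "card S \<le> N"
    "emeasure \<eta> S = 1" "cvx_le \<eta> \<mu>" using PcvxE[OF assms(1)] by metis
  have "real_distortion \<Gamma> \<le> real_distortion S" by (rule real_distortion_opt_quantizer_le[OF assms(2) S(3-5)])
  moreover have "(\<integral>x. norm x ^ 2 \<partial>\<eta>) \<le> (\<integral>x. norm x ^ 2 \<partial>\<mu>) - real_distortion S"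
    by (rule second_moment_le_of_cvx_le[OF S(7,1-3,6)])
  ultimately show ?thesis by simp
qed

lemma bdd_above_second_moment: "bdd_above ((\<lambda>\<eta>. \<integral>x. norm x ^ 2 \<partial>\<eta>) ` Pcvx \<mu> N)"
proof (rule bdd_aboveI2)
  fix \<eta> assume "\<eta> \<in> Pcvx \<mu> N"
  then obtain S where S: "prob_space \<eta>" "sets \<eta> = sets borel" "finite S" "emeasure \<eta> S = 1" "cvx_le \<eta> \<mu>"
    by (rule PcvxE)
  show "(\<integral>x. norm x ^ 2 \<partial>\<eta>) \<le> (\<integral>x. norm x ^ 2 \<partial>\<mu>)"
    using second_moment_le_of_cvx_le[OF S(5,1-4)] real_distortion_nonneg[of S] by simp
qed

text \<open>Witnessed by the image of \<open>\<mu>\<close> under the Lloyd step of \<open>\<Gamma>'\<close>.\<close>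
lemma Pcvx_grid_bounds:
  assumes "finite \<Gamma>'" "\<Gamma>' \<noteq> {}" "card \<Gamma>' \<le> N"
  shows "(INF \<eta>\<in>Pcvx \<mu> N. W2 \<mu> \<eta>) \<le> sqrt (real_distortion \<Gamma>')"
    "(\<integral>x. norm x ^ 2 \<partial>\<mu>) - real_distortion \<Gamma>' \<le> (SUP \<eta>\<in>Pcvx \<mu> N. \<integral>x. norm x ^ 2 \<partial>\<eta>)"
proof -
  obtain q R where qR: "self_consistent q R" "card R \<le> card \<Gamma>'"
    "(\<integral>x. dist x (q x) ^ 2 \<partial>\<mu>) \<le> real_distortion \<Gamma>'"
    using ex_self_consistent_le_real_distortion[OF assms(1,2)] by blast
  have \<nu>: "distr \<mu> borel q \<in> Pcvx \<mu> N"
    using distr_self_consistent_in_Pcvx[OF qR(1)] qR(2) assms(3) by simp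
  have "(INF \<eta>\<in>Pcvx \<mu> N. W2 \<mu> \<eta>) \<le> W2 \<mu> (distr \<mu> borel q)" by (rule cINF_lower[OF bdd_below_W2 \<nu>])
  also have "\<dots> \<le> sqrt (\<integral>x. dist x (q x) ^ 2 \<partial>\<mu>)"
    using self_consistentD[OF qR(1)] by (intro W2_distr_le) auto
  also have "\<dots> \<le> sqrt (real_distortion \<Gamma>')" using qR(3) by simp
  finally show "(INF \<eta>\<in>Pcvx \<mu> N. W2 \<mu> \<eta>) \<le> sqrt (real_distortion \<Gamma>')" .
  have "(\<integral>x. norm x ^ 2 \<partial>\<mu>) - real_distortion \<Gamma>' \<le> (\<integral>x. norm x ^ 2 \<partial>distr \<mu> borel q)"
    using second_moment_distr_self_consistent[OF qR(1)] qR(3) by simp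
  also have "\<dots> \<le> (SUP \<eta>\<in>Pcvx \<mu> N. \<integral>x. norm x ^ 2 \<partial>\<eta>)" by (rule cSUP_upper[OF \<nu> bdd_above_second_moment])
  finally show "(\<integral>x. norm x ^ 2 \<partial>\<mu>) - real_distortion \<Gamma>' \<le> (SUP \<eta>\<in>Pcvx \<mu> N. \<integral>x. norm x ^ 2 \<partial>\<eta>)" .
qed

lemma opt_quantizer_projection_extremal:
  assumes opt: "opt_quantizer \<mu> N \<Gamma>" and p: "nn_proj \<Gamma> p"
  shows "distr \<mu> borel p \<in> Pcvx \<mu> N" "emeasure (distr \<mu> borel p) \<Gamma> = 1"
    "W2 \<mu> (distr \<mu> borel p) = (INF \<eta>\<in>Pcvx \<mu> N. W2 \<mu> \<eta>)"
    "(\<integral>x. norm x ^ 2 \<partial>distr \<mu> borel p) = (SUP \<eta>\<in>Pcvx \<mu> N. \<integral>x. norm x ^ 2 \<partial>\<eta>)"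
proof -
  have sc: "self_consistent p \<Gamma>" by (rule opt_quantizer_nn_proj_self_consistent[OF opt p])
  note q = self_consistentD[OF sc]
  show \<nu>: "distr \<mu> borel p \<in> Pcvx \<mu> N"
    using opt by (intro distr_self_consistent_in_Pcvx[OF sc]) (simp add: opt_quantizer_def)
  show "emeasure (distr \<mu> borel p) \<Gamma> = 1" by (rule distr_finite_range(3)[OF q(1-3)])
  have "W2 \<mu> (distr \<mu> borel p) \<le> W2 \<mu> \<eta>" if "\<eta> \<in> Pcvx \<mu> N" for \<eta>
    using W2_distr_le[OF q(1-3)] Pcvx_W2_lower_bound[OF that opt] by (simp add: real_distortion_nn_proj[OF p])
  then show "W2 \<mu> (distr \<mu> borel p) = (INF \<eta>\<in>Pcvx \<mu> N. W2 \<mu> \<eta>)"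
    using \<nu> by (intro antisym cINF_greatest cINF_lower[OF bdd_below_W2]) auto
  have "(\<integral>x. norm x ^ 2 \<partial>\<eta>) \<le> (\<integral>x. norm x ^ 2 \<partial>distr \<mu> borel p)" if "\<eta> \<in> Pcvx \<mu> N" for \<eta>
    using second_moment_distr_self_consistent[OF sc] Pcvx_second_moment_upper_bound[OF that opt]
    by (simp add: real_distortion_nn_proj[OF p])
  then show "(\<integral>x. norm x ^ 2 \<partial>distr \<mu> borel p) = (SUP \<eta>\<in>Pcvx \<mu> N. \<integral>x. norm x ^ 2 \<partial>\<eta>)"
    using \<nu> by (intro antisym cSUP_upper[OF _ bdd_above_second_moment] cSUP_least) auto
qed

lemma opt_quantizer_W2_minimal_iff:
  assumes "finite \<Gamma>" "card \<Gamma> \<le> N"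
  shows "opt_quantizer \<mu> N \<Gamma> \<longleftrightarrow>
     (\<exists>\<nu>\<in>Pcvx \<mu> N. emeasure \<nu> \<Gamma> = 1 \<and> W2 \<mu> \<nu> = (INF \<eta>\<in>Pcvx \<mu> N. W2 \<mu> \<eta>))"
proof
  assume opt: "opt_quantizer \<mu> N \<Gamma>"
  then obtain p where "nn_proj \<Gamma> p" using ex_nn_proj[OF assms(1)] by (auto simp: opt_quantizer_def)
  from opt_quantizer_projection_extremal[OF opt this]
  show "\<exists>\<nu>\<in>Pcvx \<mu> N. emeasure \<nu> \<Gamma> = 1 \<and> W2 \<mu> \<nu> = (INF \<eta>\<in>Pcvx \<mu> N. W2 \<mu> \<eta>)" by blast
next
  assume "\<exists>\<nu>\<in>Pcvx \<mu> N. emeasure \<nu> \<Gamma> = 1 \<and> W2 \<mu> \<nu> = (INF \<eta>\<in>Pcvx \<mu> N. W2 \<mu> \<eta>)"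
  then obtain \<nu> where \<nu>: "\<nu> \<in> Pcvx \<mu> N" "emeasure \<nu> \<Gamma> = 1" "W2 \<mu> \<nu> = (INF \<eta>\<in>Pcvx \<mu> N. W2 \<mu> \<eta>)"
    by blast
  have lower: "real_distortion \<Gamma> \<le> W2 \<mu> \<nu> ^ 2"
    using PcvxE[OF \<nu>(1)] by (metis real_distortion_le_W2 assms(1) \<nu>(2))
  have "real_distortion \<Gamma> \<le> real_distortion \<Gamma>'" if "finite \<Gamma>'" "\<Gamma>' \<noteq> {}" "card \<Gamma>' \<le> N" for \<Gamma>'
  proof -
    have "W2 \<mu> \<nu> \<le> sqrt (real_distortion \<Gamma>')" using Pcvx_grid_bounds(1)[OF that] \<nu>(3) by simp
    then have "W2 \<mu> \<nu> ^ 2 \<le> sqrt (real_distortion \<Gamma>') ^ 2" using W2_nonneg by (intro power_mono) auto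
    then show ?thesis using lower real_distortion_nonneg[of \<Gamma>'] by simp
  qed
  then show "opt_quantizer \<mu> N \<Gamma>"
    using assms \<nu>(2) by (auto simp: opt_quantizer_iff_real_distortion)
qed

lemma opt_quantizer_second_moment_maximal_iff:
  assumes "finite \<Gamma>" "card \<Gamma> \<le> N"
  shows "opt_quantizer \<mu> N \<Gamma> \<longleftrightarrow>
     (\<exists>\<nu>\<in>Pcvx \<mu> N. emeasure \<nu> \<Gamma> = 1 \<and> (\<integral>x. norm x ^ 2 \<partial>\<nu>) = (SUP \<eta>\<in>Pcvx \<mu> N. \<integral>x. norm x ^ 2 \<partial>\<eta>))"
proof
  assume opt: "opt_quantizer \<mu> N \<Gamma>"
  then obtain p where "nn_proj \<Gamma> p" using ex_nn_proj[OF assms(1)] by (auto simp: opt_quantizer_def)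
  from opt_quantizer_projection_extremal[OF opt this]
  show "\<exists>\<nu>\<in>Pcvx \<mu> N. emeasure \<nu> \<Gamma> = 1 \<and> (\<integral>x. norm x ^ 2 \<partial>\<nu>) = (SUP \<eta>\<in>Pcvx \<mu> N. \<integral>x. norm x ^ 2 \<partial>\<eta>)"
    by blast
next
  assume "\<exists>\<nu>\<in>Pcvx \<mu> N. emeasure \<nu> \<Gamma> = 1 \<and> (\<integral>x. norm x ^ 2 \<partial>\<nu>) = (SUP \<eta>\<in>Pcvx \<mu> N. \<integral>x. norm x ^ 2 \<partial>\<eta>)"
  then obtain \<nu> where \<nu>: "\<nu> \<in> Pcvx \<mu> N" "emeasure \<nu> \<Gamma> = 1"
    "(\<integral>x. norm x ^ 2 \<partial>\<nu>) = (SUP \<eta>\<in>Pcvx \<mu> N. \<integral>x. norm x ^ 2 \<partial>\<eta>)" by blast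
  have upper: "(\<integral>x. norm x ^ 2 \<partial>\<nu>) \<le> (\<integral>x. norm x ^ 2 \<partial>\<mu>) - real_distortion \<Gamma>"
    using PcvxE[OF \<nu>(1)] by (metis second_moment_le_of_cvx_le assms(1) \<nu>(2))
  have "real_distortion \<Gamma> \<le> real_distortion \<Gamma>'" if "finite \<Gamma>'" "\<Gamma>' \<noteq> {}" "card \<Gamma>' \<le> N" for \<Gamma>'
    using Pcvx_grid_bounds(2)[OF that] \<nu>(3) upper by simp
  then show "opt_quantizer \<mu> N \<Gamma>"
    using assms \<nu>(2) by (auto simp: opt_quantizer_iff_real_distortion)
qed

end

context P2_measure
begin

lemma real_distortion_le_quadratic_cost:
  assumes \<pi>: "\<pi> \<in> couplings \<eta> \<mu>" and \<eta>: "prob_space \<eta>" "sets \<eta> = sets borel" "finite S" "emeasure \<eta> S = 1"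
  shows "ennreal (real_distortion S) \<le> quadratic_cost \<pi>"
proof -
  have S: "S \<noteq> {}" using \<eta>(4) by auto
  have "ennreal (real_distortion S) = (\<integral>\<^sup>+x. ennreal (infdist x S ^ 2) \<partial>\<mu>)"
    using distortion_eq_real_distortion[OF S] by (simp add: distortion_def)
  also have "\<dots> = (\<integral>\<^sup>+z. ennreal (infdist (snd z) S ^ 2) \<partial>\<pi>)"
    by (rule nn_integral_coupling_snd[OF \<pi>, symmetric])
      (intro measurable_compose[OF _ measurable_ennreal] borel_measurable_continuous_onI continuous_intros)
  also have "\<dots> \<le> quadratic_cost \<pi>"
    unfolding quadratic_cost_def
    using AE_coupling_fst[OF \<pi> AE_in_finite_support[OF \<eta>] finite_in_sets_borel[OF \<eta>(3)]]
  proof (intro nn_integral_mono_AE, eventually_elim)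
    fix z :: "'a \<times> 'a" assume "fst z \<in> S"
    from power2_infdist_le[OF this, of "snd z"]
    show "ennreal (infdist (snd z) S ^ 2) \<le> ennreal (dist (fst z) (snd z) ^ 2)"
      by (simp add: dist_commute ennreal_leI)
  qed
  finally show ?thesis .
qed

text \<open>The cell-kernel coupling attains the lower bound \<open>real_distortion \<Gamma>\<close> valid for all couplings.\<close>
lemma opt_quantizer_W2_eq_M2:
  assumes opt: "opt_quantizer \<mu> N \<Gamma>" and p: "nn_proj \<Gamma> p"
  shows "W2 (distr \<mu> borel p) \<mu> = M2 (distr \<mu> borel p) \<mu>"
proof -
  have sc: "self_consistent p \<Gamma>" by (rule opt_quantizer_nn_proj_self_consistent[OF opt p])
  note q = self_consistentD[OF sc] and d = distr_finite_range[OF q(1-3)]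
  define \<nu> where "\<nu> = distr \<mu> borel p"
  have M: "(INF \<pi>\<in>mart_couplings \<nu> \<mu>. quadratic_cost \<pi>) \<le> ennreal (real_distortion \<Gamma>)"
    unfolding \<nu>_def
    using quadratic_cost_cell_kernel_coupling[OF q(1-3)] real_distortion_nn_proj[OF p]
    by (intro INF_lower2[OF cell_kernel_coupling_in_mart_couplings[OF sc]]) simp
  have W: "ennreal (real_distortion \<Gamma>) \<le> (INF \<pi>\<in>couplings \<nu> \<mu>. quadratic_cost \<pi>)"
    unfolding \<nu>_def by (intro INF_greatest real_distortion_le_quadratic_cost[OF _ d(1,2) q(2) d(3)])
  have "(INF \<pi>\<in>couplings \<nu> \<mu>. quadratic_cost \<pi>) \<le> (INF \<pi>\<in>mart_couplings \<nu> \<mu>. quadratic_cost \<pi>)"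
    by (rule INF_superset_mono) (auto simp: mart_couplings_def)
  then have "(INF \<pi>\<in>couplings \<nu> \<mu>. quadratic_cost \<pi>) = (INF \<pi>\<in>mart_couplings \<nu> \<mu>. quadratic_cost \<pi>)"
    using M W by (intro antisym) auto
  then show ?thesis unfolding W2_eq M2_eq \<nu>_def by simp
qed

text \<open>Either extremality property bounds the mass of \<open>\<nu>\<close> at \<open>\<gamma>\<close> through the \<open>\<epsilon>\<close>-perturbed
  inequalities, whose unperturbed versions are attained.\<close>
lemma extremal_mass_le_voronoi_cell:
  assumes \<Gamma>: "finite \<Gamma>" "card \<Gamma> \<le> N" and \<nu>: "\<nu> \<in> Pcvx \<mu> N" "emeasure \<nu> \<Gamma> = 1"
    and extremal: "W2 \<mu> \<nu> = (INF \<eta>\<in>Pcvx \<mu> N. W2 \<mu> \<eta>) \<or>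
      (\<integral>x. norm x ^ 2 \<partial>\<nu>) = (SUP \<eta>\<in>Pcvx \<mu> N. \<integral>x. norm x ^ 2 \<partial>\<eta>)"
    and \<gamma>: "\<gamma> \<in> \<Gamma>"
  shows "measure \<nu> {\<gamma>} \<le> measure \<mu> (voronoi_cell \<Gamma> \<gamma>)"
proof (rule measure_voronoi_cell_ge[OF \<gamma>])
  fix \<epsilon> :: real assume \<epsilon>: "\<epsilon> > 0"
  have \<Gamma>ne: "\<Gamma> \<noteq> {}" using \<gamma> by auto
  obtain S where S: "prob_space \<nu>" "sets \<nu> = sets borel" "cvx_le \<nu> \<mu>" using PcvxE[OF \<nu>(1)] by metis
  have "\<epsilon> * measure \<nu> {\<gamma>} \<le> \<epsilon> * measure \<mu> (voronoi_nbhd \<Gamma> \<gamma> \<epsilon>)"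
    using extremal
  proof
    assume "W2 \<mu> \<nu> = (INF \<eta>\<in>Pcvx \<mu> N. W2 \<mu> \<eta>)"
    then have "W2 \<mu> \<nu> \<le> sqrt (real_distortion \<Gamma>)" using Pcvx_grid_bounds(1)[OF \<Gamma>(1) \<Gamma>ne \<Gamma>(2)] by simp
    then have "W2 \<mu> \<nu> ^ 2 \<le> sqrt (real_distortion \<Gamma>) ^ 2" using W2_nonneg by (intro power_mono) auto
    then have "W2 \<mu> \<nu> ^ 2 \<le> real_distortion \<Gamma>" using real_distortion_nonneg[of \<Gamma>] by simp
    then show ?thesis
      using W2_perturbed_lower_bound[OF S(1,2) \<Gamma>(1) \<nu>(2), of \<epsilon> \<gamma>] \<epsilon> by linarith
  next
    assume "(\<integral>x. norm x ^ 2 \<partial>\<nu>) = (SUP \<eta>\<in>Pcvx \<mu> N. \<integral>x. norm x ^ 2 \<partial>\<eta>)"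
    then have "(\<integral>x. norm x ^ 2 \<partial>\<mu>) - real_distortion \<Gamma> \<le> (\<integral>x. norm x ^ 2 \<partial>\<nu>)"
      using Pcvx_grid_bounds(2)[OF \<Gamma>(1) \<Gamma>ne \<Gamma>(2)] by simp
    then show ?thesis
      using second_moment_perturbed_upper_bound[OF S(3,1,2) \<Gamma>(1) \<nu>(2) \<gamma>, of \<epsilon>] \<epsilon> by linarith
  qed
  then show "measure \<nu> {\<gamma>} \<le> measure \<mu> (voronoi_nbhd \<Gamma> \<gamma> \<epsilon>)" using \<epsilon> by simp
qed

lemma extremal_measure_eq_projection:
  assumes \<Gamma>: "finite \<Gamma>" "card \<Gamma> \<le> N" and \<nu>: "\<nu> \<in> Pcvx \<mu> N" "emeasure \<nu> \<Gamma> = 1"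
    and extremal: "W2 \<mu> \<nu> = (INF \<eta>\<in>Pcvx \<mu> N. W2 \<mu> \<eta>) \<or>
      (\<integral>x. norm x ^ 2 \<partial>\<nu>) = (SUP \<eta>\<in>Pcvx \<mu> N. \<integral>x. norm x ^ 2 \<partial>\<eta>)"
    and p: "nn_proj \<Gamma> p"
  shows "\<nu> = distr \<mu> borel p"
proof -
  have opt: "opt_quantizer \<mu> N \<Gamma>"
    using extremal opt_quantizer_W2_minimal_iff[OF \<Gamma>] opt_quantizer_second_moment_maximal_iff[OF \<Gamma>] \<nu> by blast
  note pp = nn_projD[OF p]
  note d = distr_finite_range[OF pp(1) \<Gamma>(1)] pp(2)
  obtain S where S: "prob_space \<nu>" "sets \<nu> = sets borel" using PcvxE[OF \<nu>(1)] by metis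
  show ?thesis
  proof (rule finite_support_measure_eqI[OF S \<nu>(2) _ _ _ \<Gamma>(1)])
    show "prob_space (distr \<mu> borel p)" "sets (distr \<mu> borel p) = sets borel"
      "emeasure (distr \<mu> borel p) \<Gamma> = 1" using distr_finite_range[OF pp(1) \<Gamma>(1)] pp(2) by auto
    fix \<gamma> assume \<gamma>: "\<gamma> \<in> \<Gamma>"
    have "measure \<nu> {\<gamma>} \<le> measure \<mu> (p -` {\<gamma>})"
      using extremal_mass_le_voronoi_cell[OF \<Gamma> \<nu> extremal \<gamma>]
        opt_quantizer_voronoi_cell_le_projection[OF opt p \<gamma>] by simp
    then show "measure \<nu> {\<gamma>} \<le> measure (distr \<mu> borel p) {\<gamma>}"
      using emeasure_distr_singleton[OF pp(1), of \<gamma>] by (simp add: measure_def)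
  qed
qed

end


theorem proposition1:
  fixes \<mu> :: "'a::euclidean_space measure" and N :: nat and \<Gamma> :: "'a set"
  assumes "P2 \<mu>" and "N \<ge> 1" and "finite \<Gamma>" and "card \<Gamma> \<le> N"
  shows "(opt_quantizer \<mu> N \<Gamma> \<longleftrightarrow>
            (\<exists>\<nu>\<in>Pcvx \<mu> N. emeasure \<nu> \<Gamma> = 1 \<and> W2 \<mu> \<nu> = (INF \<eta>\<in>Pcvx \<mu> N. W2 \<mu> \<eta>)))
       \<and> (opt_quantizer \<mu> N \<Gamma> \<longleftrightarrow>
            (\<exists>\<nu>\<in>Pcvx \<mu> N. emeasure \<nu> \<Gamma> = 1 \<and>
               (\<integral>x. norm x ^ 2 \<partial>\<nu>) = (SUP \<eta>\<in>Pcvx \<mu> N. \<integral>x. norm x ^ 2 \<partial>\<eta>)))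
       \<and> (\<forall>\<nu>\<in>Pcvx \<mu> N. emeasure \<nu> \<Gamma> = 1 \<and>
            (W2 \<mu> \<nu> = (INF \<eta>\<in>Pcvx \<mu> N. W2 \<mu> \<eta>) \<or>
             (\<integral>x. norm x ^ 2 \<partial>\<nu>) = (SUP \<eta>\<in>Pcvx \<mu> N. \<integral>x. norm x ^ 2 \<partial>\<eta>))
          \<longrightarrow> W2 \<nu> \<mu> = M2 \<nu> \<mu> \<and> (\<forall>p. nn_proj \<Gamma> p \<longrightarrow> \<nu> = distr \<mu> borel p))"
proof -
  interpret P2_measure \<mu> by unfold_locales (rule assms(1))
  note W2_minimal = opt_quantizer_W2_minimal_iff[OF assms(3,4)]
  note second_moment_maximal = opt_quantizer_second_moment_maximal_iff[OF assms(3,4)]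
  have "W2 \<nu> \<mu> = M2 \<nu> \<mu> \<and> (\<forall>p. nn_proj \<Gamma> p \<longrightarrow> \<nu> = distr \<mu> borel p)"
    if \<nu>: "\<nu> \<in> Pcvx \<mu> N" "emeasure \<nu> \<Gamma> = 1"
      and extremal: "W2 \<mu> \<nu> = (INF \<eta>\<in>Pcvx \<mu> N. W2 \<mu> \<eta>) \<or>
        (\<integral>x. norm x ^ 2 \<partial>\<nu>) = (SUP \<eta>\<in>Pcvx \<mu> N. \<integral>x. norm x ^ 2 \<partial>\<eta>)" for \<nu>
  proof -
    have opt: "opt_quantizer \<mu> N \<Gamma>" using extremal W2_minimal second_moment_maximal \<nu> by blast
    then obtain p where p: "nn_proj \<Gamma> p" using ex_nn_proj[OF assms(3)] by (auto simp: opt_quantizer_def)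
    note \<nu>_eq = extremal_measure_eq_projection[OF assms(3,4) \<nu> extremal]
    show ?thesis using opt_quantizer_W2_eq_M2[OF opt p] \<nu>_eq[OF p] \<nu>_eq by simp
  qed
  then show ?thesis using W2_minimal second_moment_maximal by blast
qed

end
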